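(* Let $f(x)=\frac1n\sum_{i=1}^n f_i(x)$ with each $f_i:\mathbb{R}^d\to\mathbb{R}$ differentiable, let $x^*$ be a minimizer of $f$, and assume there is $\mu>0$ with $f(x^* )\ge f(x)+\langle\nabla f(x),x^*-x\rangle+\frac{\mu}{2}\|x^*-x\|_2^2$ for all $x\in\mathbb{R}^d$. Let $\mathbf W\succ0$ be a symmetric positive definite $n\times n$ matrix and $\mathcal D$ a distribution of random matrices $\mathbf S\in\mathbb{R}^{n\times\tau}$, and let $\theta_{\mathbf S}$ be a random variable (a function of $\mathbf S$) such that $\mathbb{E}_{\mathcal D}[\theta_{\mathbf S}\Pi_{\mathbf S}e]=e$. Assume there are constants $\mathcal L_1>0$, $\mathcal L_2>0$ with $$\mathbb{E}_{\mathcal D}\|\nabla f_{\mathbf S}(x)-\nabla f_{\mathbf S}(x^* )\|_2^2\le 2\mathcal L_1(f(x)-f(x^* )),\qquad \mathbb{E}_{\mathcal D}\|(\mathbf{G}(x)-\mathbf{G}(x^* ))\Pi_{\mathbf S}\|_{\mathbf W^{-1}}^2\le 2\mathcal L_2(f(x)-f(x^* ))$$ for all $x\in\mathbb{R}^d$. Assume $\kappa>0$, and let $\rho=\lambda_{\max}\big(\mathbf W^{1/2}(\mathbb{E}_{\mathcal D}[\theta_{\mathbf S}^2\Pi_{\mathbf S}ee^\top\Pi_{\mathbf S}^\top]-ee^\top)\mathbf W^{1/2}\big)\ge0$. Choose any $x^0\in\mathbb{R}^d$, $\mathbf J^0\in\mathbb{R}^{d\times n}$, let $\{x^k,\mathbf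 J^k\}$ be the iterates of JacSketch, and let $$\Psi^k=\|x^k-x^*\|_2^2+\frac{\alpha}{2\mathcal L_2}\|\mathbf J^k-\mathbf{G}(x^* )\|_{\mathbf W^{-1}}^2 .$$ If $0\le\alpha\le\min\left\{\frac{1}{4\mathcal L_1},\frac{\kappa}{4\mathcal L_2\rho/n^2+\mu}\right\}$, then $\mathbb{E}[\Psi^k]\le(1-\mu\alpha)^k\Psi^0$ for all $k$. If $\alpha$ equals this upper bound, then $k\ge\max\left\{\frac{4\mathcal L_1}{\mu},\ \frac1\kappa+\frac{4\rho\mathcal L_2}{\kappa\mu n^2}\right\}\log\frac1\epsilon$ implies $\mathbb{E}[\Psi^k]\le\epsilon\Psi^0$.
   Context: $\mathbf{G}(x)=[\nabla f_1(x),\dots,\nabla f_n(x)]\in\mathbb{R}^{d\times n}$ is the Jacobian; $e\in\mathbb{R}^n$ is the all-ones vector; $F(x)=(f_1(x),\dots,f_n(x))^\top$. For $\mathbf X\in\mathbb{R}^{d\times n}$, $\|\mathbf X\|_{\mathbf W^{-1}}=\sqrt{\mathrm{Tr}(\mathbf X\mathbf W^{-1}\mathbf X^\top)}$. $\Pi_{\mathbf S}=\mathbf S(\mathbf S^\top\mathbf W\mathbf S)^\dagger\mathbf S^\top\mathbf W$ ($\dagger$ = Moore–Penrose pseudoinverse), $\mathbf H_{\mathbf S}=\mathbf S(\mathbf S^\top\mathbf W\mathbf S)^\dagger\mathbf S^\top$. $f_{\mathbf S}(x)=\frac{\theta_{\mathbf S}}{n}\langle F(x),\Pi_{\mathbf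 S}e\rangle$, so $\nabla f_{\mathbf S}(x)=\frac{\theta_{\mathbf S}}{n}\mathbf{G}(x)\Pi_{\mathbf S}e$. $\kappa=\lambda_{\min}(\mathbb{E}_{\mathcal D}[\Pi_{\mathbf S}])$ (this matrix is similar to the symmetric matrix $\mathbf W^{1/2}\mathbb{E}[\mathbf H_{\mathbf S}]\mathbf W^{1/2}$). JacSketch with stepsize $\alpha>0$: for $k=0,1,\dots$, sample $\mathbf S_k\sim\mathcal D$ independently of the past, set $\mathbf J^{k+1}=\mathbf J^k+(\mathbf{G}(x^k)-\mathbf J^k)\Pi_{\mathbf S_k}$, $g^k=\frac1n\mathbf J^ke+\frac{\theta_{\mathbf S_k}}{n}(\mathbf{G}(x^k)-\mathbf J^k)\Pi_{\mathbf S_k}e$, $x^{k+1}=x^k-\alpha g^k$. $\mathbb{E}$ is total expectation over the algorithm's randomness. *)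

theory Defs
  imports "HOL-Probability.Probability"
begin

text \<open>Matrices: real^'c^'r is an r x c matrix (vector of rows).\<close>

definition ones :: "real^'n" where "ones = (\<chi> i. 1)"

definition ones_mat :: "real^'n^'n" where "ones_mat = (\<chi> i j. 1)"

definition pinv :: "real^'m^'n \<Rightarrow> real^'n^'m" where
  "pinv A = (THE X. A ** X ** A = A \<and> X ** A ** X = X \<and>
                    transpose (A ** X) = A ** X \<and> transpose (X ** A) = X ** A)"

definition pos_def_mat :: "real^'n^'n \<Rightarrow> bool" where
  "pos_def_mat W \<longleftrightarrow> transpose W = W \<and> (\<forall>v. v \<noteq> 0 \<longrightarrow> 0 < v \<bullet> (W *v v))"

definition msqrt :: "real^'n^'n \<Rightarrow> real^'n^'n" where
  "msqrt W = (THE B. B ** B = W \<and> transpose B = B \<and> (\<forall>v. 0 \<le> v \<bullet> (B *v v)))"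

definition real_eigenvalues :: "real^'n^'n \<Rightarrow> real set" where
  "real_eigenvalues A = {l. \<exists>v. v \<noteq> 0 \<and> A *v v = l *\<^sub>R v}"

definition lambda_min :: "real^'n^'n \<Rightarrow> real" where
  "lambda_min A = Min (real_eigenvalues A)"

definition lambda_max :: "real^'n^'n \<Rightarrow> real" where
  "lambda_max A = Max (real_eigenvalues A)"

definition PiS :: "real^'n^'n \<Rightarrow> real^'t^'n \<Rightarrow> real^'n^'n" where
  "PiS W S = S ** pinv (transpose S ** W ** S) ** transpose S ** W"

definition wnorm :: "real^'n^'n \<Rightarrow> real^'n^'d \<Rightarrow> real" where
  "wnorm W X = sqrt (trace (X ** matrix_inv W ** transpose X))"

text \<open>Jacobian G(x) = [\<nabla>f_1(x), ..., \<nabla>f_n(x)] (d x n) from the gradients.\<close>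
definition jac :: "('n \<Rightarrow> real^'d \<Rightarrow> real^'d) \<Rightarrow> real^'d \<Rightarrow> real^'n^'d" where
  "jac gf x = (\<chi> r c. gf c x $ r)"

text \<open>JacSketch iterates (x^k, J^k) driven by the sample sequence \<omega> (S_k = \<omega> k).\<close>
primrec jacsketch ::
  "real^'n^'n \<Rightarrow> (real^'t^'n \<Rightarrow> real) \<Rightarrow> (real^'d \<Rightarrow> real^'n^'d) \<Rightarrow> real
   \<Rightarrow> real^'d \<Rightarrow> real^'n^'d \<Rightarrow> (nat \<Rightarrow> real^'t^'n) \<Rightarrow> nat \<Rightarrow> (real^'d) \<times> (real^'n^'d)" where
  "jacsketch W \<theta> G \<alpha> x0 J0 \<omega> 0 = (x0, J0)"
| "jacsketch W \<theta> G \<alpha> x0 J0 \<omega> (Suc k) =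
     (let (x, J) = jacsketch W \<theta> G \<alpha> x0 J0 \<omega> k;
          P = PiS W (\<omega> k);
          g = (1 / real CARD('n)) *\<^sub>R (J *v ones)
              + (\<theta> (\<omega> k) / real CARD('n)) *\<^sub>R ((G x - J) ** P *v ones)
      in (x - \<alpha> *\<^sub>R g, J + (G x - J) ** P))"

definition kappa :: "real^'n^'n \<Rightarrow> (real^'t^'n) measure \<Rightarrow> real" where
  "kappa W D = lambda_min (integral\<^sup>L D (\<lambda>S. PiS W S))"

definition rho :: "real^'n^'n \<Rightarrow> (real^'t^'n \<Rightarrow> real) \<Rightarrow> (real^'t^'n) measure \<Rightarrow> real" where
  "rho W \<theta> D = lambda_max (msqrt W **
      (integral\<^sup>L D (\<lambda>S. (\<theta> S)\<^sup>2 *\<^sub>R (PiS W S ** ones_mat ** transpose (PiS W S))) - ones_mat)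
      ** msqrt W)"

definition Psi :: "real^'n^'n \<Rightarrow> (real^'d \<Rightarrow> real^'n^'d) \<Rightarrow> real^'d \<Rightarrow> real \<Rightarrow> real
                   \<Rightarrow> (real^'d) \<times> (real^'n^'d) \<Rightarrow> real" where
  "Psi W G xs \<alpha> L2 s = (norm (fst s - xs))\<^sup>2 + \<alpha> / (2 * L2) * (wnorm W (snd s - G xs))\<^sup>2"

text \<open>Total expectation E[\<Psi>^k]: S_0,...,S_{k-1} are i.i.d. with law D.\<close>
definition EPsi :: "real^'n^'n \<Rightarrow> (real^'t^'n \<Rightarrow> real) \<Rightarrow> (real^'t^'n) measure
                    \<Rightarrow> (real^'d \<Rightarrow> real^'n^'d) \<Rightarrow> real^'d \<Rightarrow> real \<Rightarrow> real
                    \<Rightarrow> real^'d \<Rightarrow> real^'n^'d \<Rightarrow> nat \<Rightarrow> ennreal" where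
  "EPsi W \<theta> D G xs \<alpha> L2 x0 J0 k =
     (\<integral>\<^sup>+ \<omega>. ennreal (Psi W G xs \<alpha> L2 (jacsketch W \<theta> G \<alpha> x0 J0 \<omega> k)) \<partial>(\<Pi>\<^sub>M i\<in>{..<k}. D))"

end

theory Submission
  imports Defs
begin

text \<open>
  One step of JacSketch contracts the Lyapunov function \<open>\<Psi>\<close> in expectation by \<open>1 - \<mu>\<alpha>\<close>.
  Since \<open>G(x\<^sup>*) e = 0\<close>, the gradient estimate splits as \<open>g = a + b\<close> with
  \<open>a = \<nabla>f\<^sub>S(x) - \<nabla>f\<^sub>S(x\<^sup>*)\<close> and \<open>b = (J - G(x\<^sup>*))(e - \<theta>\<^sub>S\<Pi>\<^sub>Se)/n\<close>; unbiasedness gives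
  \<open>E g = \<nabla>f(x)\<close>, the first expected smoothness constant bounds \<open>E\<parallel>a\<parallel>\<^sup>2\<close>, and \<open>E\<parallel>b\<parallel>\<^sup>2\<close> is a
  variance controlled by \<open>\<rho>\<close>. The Jacobian update satisfies
  \<open>\<parallel>J\<^sup>+ - G(x\<^sup>*)\<parallel>\<^sup>2 = \<parallel>Y\<parallel>\<^sup>2 - tr(Y H\<^sub>S Y\<^sup>T) + tr(Z H\<^sub>S Z\<^sup>T)\<close> (norms in \<open>W\<^sup>-\<^sup>1\<close>,
  \<open>Y = J - G(x\<^sup>*)\<close>, \<open>Z = G(x) - G(x\<^sup>*)\<close>), whose expectation is at most
  \<open>(1 - \<kappa>)\<parallel>Y\<parallel>\<^sup>2 + 2L\<^sub>2(f(x) - f(x\<^sup>*))\<close>. Quasi-strong convexity and the two stepsize bounds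
  then absorb all terms. Iterating over the independent samples gives the linear rate, and
  \<open>(1 - t)\<^sup>k \<le> e\<^sup>-\<^sup>t\<^sup>k\<close> the complexity bound. The spectral facts about \<open>W\<^sup>1\<^sup>/\<^sup>2\<close>, the pseudoinverse
  and the extreme eigenvalues come from the spectral theorem for real symmetric matrices,
  obtained by maximising the Rayleigh quotient.
\<close>

section \<open>Real symmetric matrices\<close>

lemma inner_matrix_vector_transpose:
  fixes A :: "real^'n^'m"
  shows "(A *v x) \<bullet> y = x \<bullet> (transpose A *v y)"
  by (metis dot_lmul_matrix inner_commute transpose_matrix_vector)

lemma inner_matrix_vector_symmetric:
  fixes A :: "real^'n^'n"
  assumes "transpose A = A"
  shows "(A *v x) \<bullet> y = x \<bullet> (A *v y)"
  by (metis assms inner_matrix_vector_transpose)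

lemma matrix_vector_mult_uminus_left: "(- A) *v x = - (A *v x)"
  for A :: "real^'n^'m"
  using matrix_vector_mult_diff_rdistrib[of 0 A x] by simp

lemma matrix_vector_mult_uminus_right: "A *v (- x) = - (A *v x)"
  for A :: "real^'n^'m"
  by (simp add: linear_neg[OF matrix_vector_mul_linear])

lemma matrix_vector_mult_sum_left: "sum f S *v x = (\<Sum>u\<in>S. f u *v x)"
  for f :: "'a \<Rightarrow> real^'n^'m"
  by (induction S rule: infinite_finite_induct) (auto simp: matrix_vector_mult_add_rdistrib)

lemma matrix_vector_mult_sum_right: "A *v sum f S = (\<Sum>u\<in>S. A *v f u)"
  for A :: "real^'n^'m"
  by (simp add: linear_sum[OF matrix_vector_mul_linear] o_def)

lemma transpose_sum: "transpose (sum f S) = (\<Sum>x\<in>S. transpose (f x))"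
  for f :: "'a \<Rightarrow> real^'n^'m"
  by (simp add: transpose_def vec_eq_iff)

lemma matrix_add_rdistrib: "(A + B) ** C = A ** C + B ** C"
  for A B :: "real^'n^'m" and C :: "real^'k^'n"
  by (simp add: matrix_matrix_mult_def vec_eq_iff algebra_simps sum.distrib)

lemma bounded_linear_transpose: "bounded_linear (transpose :: real^'n^'m \<Rightarrow> real^'m^'n)"
proof -
  have "linear (transpose :: real^'n^'m \<Rightarrow> real^'m^'n)"
    by (rule linearI) (simp_all add: transpose_def vec_eq_iff)
  then show ?thesis by (simp add: linear_conv_bounded_linear)
qed

lemma bounded_linear_matrix_mult_right: "bounded_linear (\<lambda>A::real^'n^'m. A ** C)"
proof -
  have "linear (\<lambda>A::real^'n^'m. A ** C)"
    by (rule linearI) (simp_all add: matrix_add_rdistrib scalar_matrix_assoc[symmetric])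
  then show ?thesis by (simp add: linear_conv_bounded_linear)
qed

lemma continuous_on_quadratic_form: "continuous_on S (\<lambda>w. w \<bullet> (A *v w))"
  for A :: "real^'n^'n"
proof -
  have "continuous_on S (\<lambda>w. A *v w)"
    by (rule linear_continuous_on) (simp add: linear_conv_bounded_linear)
  then show ?thesis by (auto intro!: continuous_intros)
qed

lemma linear_coeff_zero_if_quadratic_nonneg:
  fixes a b :: real
  assumes nonneg: "\<And>t. 0 \<le> t * a + t\<^sup>2 * b"
  shows "a = 0"
proof -
  define s where "s = \<bar>b\<bar> + 1"
  have "s > 0" "b < s" by (auto simp: s_def)
  have "0 \<le> (- a / s) * a + (- a / s)\<^sup>2 * b" by (rule nonneg)
  also have "\<dots> = a\<^sup>2 * (b - s) / s\<^sup>2"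
    using \<open>s > 0\<close> by (simp add: power2_eq_square field_simps)
  finally have "0 \<le> a\<^sup>2 * (b - s)"
    using \<open>s > 0\<close> by (simp add: zero_le_divide_iff)
  with \<open>b < s\<close> show "a = 0" by (simp add: mult_nonneg_nonpos2 zero_le_mult_iff)
qed

text \<open>At \<open>u + t y\<close> the form is a nonnegative quadratic in \<open>t\<close> vanishing at \<open>t = 0\<close>, so its
  linear coefficient \<open>2 y\<bullet>Nu\<close> is zero.\<close>
lemma psd_form_zero_imp_orthogonal:
  fixes N :: "real^'n^'n"
  assumes sym: "transpose N = N" and V: "subspace V"
    and psd: "\<And>w. w \<in> V \<Longrightarrow> 0 \<le> w \<bullet> (N *v w)"
    and u: "u \<in> V" and zero: "u \<bullet> (N *v u) = 0" and y: "y \<in> V"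
  shows "y \<bullet> (N *v u) = 0"
proof -
  have "2 * (y \<bullet> (N *v u)) = 0"
  proof (rule linear_coeff_zero_if_quadratic_nonneg)
    fix t :: real
    have "u + t *\<^sub>R y \<in> V" using V u y by (simp add: subspace_add subspace_scale)
    then have "0 \<le> (u + t *\<^sub>R y) \<bullet> (N *v (u + t *\<^sub>R y))" by (rule psd)
    also have "\<dots> = u \<bullet> (N *v u) + t * (y \<bullet> (N *v u) + u \<bullet> (N *v y)) + t\<^sup>2 * (y \<bullet> (N *v y))"
      by (simp add: matrix_vector_right_distrib matrix_vector_mult_scaleR inner_add_left
          inner_add_right algebra_simps power2_eq_square)
    also have "u \<bullet> (N *v y) = y \<bullet> (N *v u)"
      using inner_matrix_vector_symmetric[OF sym, of u y] by (simp add: inner_commute)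
    finally show "0 \<le> t * (2 * (y \<bullet> (N *v u))) + t\<^sup>2 * (y \<bullet> (N *v y))"
      using zero by (simp add: algebra_simps)
  qed
  then show ?thesis by simp
qed

lemma psd_form_zero_imp_null:
  fixes N :: "real^'n^'n"
  assumes "transpose N = N" and "\<And>w. 0 \<le> w \<bullet> (N *v w)" and "x \<bullet> (N *v x) = 0"
  shows "N *v x = 0"
  using psd_form_zero_imp_orthogonal[OF assms(1) subspace_UNIV, of x "N *v x"] assms(2,3) by simp

text \<open>Rayleigh: for a maximiser \<open>u\<close> of the form on the unit sphere of \<open>V\<close> and \<open>c = u\<bullet>Au\<close>, the
  matrix \<open>cI - A\<close> is positive semidefinite on \<open>V\<close> and vanishes at \<open>u\<close>.\<close>
lemma symmetric_max_eigenvector_on_subspace: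
  fixes A :: "real^'n^'n"
  assumes sym: "transpose A = A" and V: "subspace V" and nontriv: "V \<noteq> {0}"
    and invariant: "\<And>v. v \<in> V \<Longrightarrow> A *v v \<in> V"
  obtains u where "u \<in> V" "norm u = 1" "A *v u = (u \<bullet> (A *v u)) *\<^sub>R u"
    "\<And>w. w \<in> V \<Longrightarrow> w \<bullet> (A *v w) \<le> (u \<bullet> (A *v u)) * (norm w)\<^sup>2"
proof -
  let ?S = "V \<inter> sphere 0 1"
  have "compact ?S"
    by (simp add: V closed_subspace closed_Int_compact compact_sphere)
  obtain v where "v \<in> V" "v \<noteq> 0" using nontriv V subspace_0 by blast
  then have "v /\<^sub>R norm v \<in> ?S" using V by (simp add: subspace_scale)
  then obtain u where u: "u \<in> ?S" and umax: "\<And>y. y \<in> ?S \<Longrightarrow> y \<bullet> (A *v y) \<le> u \<bullet> (A *v u)"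
    using continuous_attains_sup[OF \<open>compact ?S\<close> _ continuous_on_quadratic_form] by blast
  define c where "c = u \<bullet> (A *v u)"
  have bound: "w \<bullet> (A *v w) \<le> c * (norm w)\<^sup>2" if "w \<in> V" for w
  proof (cases "w = 0")
    case False
    then have "w /\<^sub>R norm w \<in> ?S" using that V by (simp add: subspace_scale)
    then have "(w /\<^sub>R norm w) \<bullet> (A *v (w /\<^sub>R norm w)) \<le> c" using umax c_def by blast
    then have "(w \<bullet> (A *v w)) / (norm w)\<^sup>2 \<le> c"
      by (simp add: matrix_vector_mult_scaleR power2_eq_square divide_simps)
    then show ?thesis using False by (simp add: divide_simps mult.commute)
  qed simp
  define N where "N = c *\<^sub>R mat 1 - A"
  have N: "N *v w = c *\<^sub>R w - A *v w" for w
    by (simp add: N_def matrix_vector_mult_diff_rdistrib scaleR_matrix_vector_assoc[symmetric])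
  have "transpose N = N" using sym by (simp add: N_def transpose_def vec_eq_iff mat_def)
  moreover have "0 \<le> w \<bullet> (N *v w)" if "w \<in> V" for w
    using bound[OF that] by (simp add: N inner_diff_right power2_norm_eq_inner)
  moreover have "u \<in> V" "norm u = 1" using u by auto
  moreover have "u \<bullet> (N *v u) = 0"
    using \<open>norm u = 1\<close> by (simp add: N inner_diff_right c_def power2_norm_eq_inner[symmetric])
  moreover have "N *v u \<in> V" using \<open>u \<in> V\<close> invariant V by (simp add: N subspace_diff subspace_scale)
  ultimately have "(N *v u) \<bullet> (N *v u) = 0" using psd_form_zero_imp_orthogonal[OF _ V] by blast
  then have "A *v u = c *\<^sub>R u" by (simp add: N)
  with \<open>u \<in> V\<close> \<open>norm u = 1\<close> bound show ?thesis using that c_def by blast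
qed

definition orthonormal :: "(real^'n) set \<Rightarrow> bool" where
  "orthonormal U \<longleftrightarrow> finite U \<and> (\<forall>u\<in>U. \<forall>w\<in>U. u \<bullet> w = (if u = w then 1 else 0))"

lemma symmetric_invariant_orthogonal_complement:
  fixes A :: "real^'n^'n"
  assumes sym: "transpose A = A" and V: "subspace V" and invariant: "\<And>v. v \<in> V \<Longrightarrow> A *v v \<in> V"
    and eig: "A *v u = c *\<^sub>R u"
  shows "subspace {w\<in>V. u \<bullet> w = 0}" and "v \<in> {w\<in>V. u \<bullet> w = 0} \<Longrightarrow> A *v v \<in> {w\<in>V. u \<bullet> w = 0}"
proof -
  show "subspace {w\<in>V. u \<bullet> w = 0}"
    using V unfolding subspace_def by (auto simp: inner_add_right)
  have "u \<bullet> (A *v v) = c * (u \<bullet> v)"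
    by (metis eig inner_matrix_vector_symmetric[OF sym] inner_scaleR_left)
  then show "v \<in> {w\<in>V. u \<bullet> w = 0} \<Longrightarrow> A *v v \<in> {w\<in>V. u \<bullet> w = 0}" using invariant by simp
qed

lemma span_insert_orthogonal_complement:
  assumes V: "subspace V" and u: "u \<in> V" "u \<bullet> u = 1" and U: "{w\<in>V. u \<bullet> w = 0} \<subseteq> span U"
  shows "V \<subseteq> span (insert u U)"
proof
  fix w assume "w \<in> V"
  then have "w - (u \<bullet> w) *\<^sub>R u \<in> {w\<in>V. u \<bullet> w = 0}"
    using u V by (simp add: subspace_diff subspace_scale inner_diff_right)
  then have "w - (u \<bullet> w) *\<^sub>R u \<in> span (insert u U)"
    using U span_mono[of U "insert u U"] by blast
  then show "w \<in> span (insert u U)"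
    by (metis diff_add_cancel insertI1 span_add span_base span_scale)
qed

lemma symmetric_orthonormal_eigenbasis_of_subspace:
  fixes A :: "real^'n^'n"
  assumes sym: "transpose A = A"
  shows "subspace V \<Longrightarrow> (\<And>v. v \<in> V \<Longrightarrow> A *v v \<in> V) \<Longrightarrow>
    \<exists>U. orthonormal U \<and> U \<subseteq> V \<and> V \<subseteq> span U \<and> (\<forall>u\<in>U. A *v u = (u \<bullet> (A *v u)) *\<^sub>R u)"
proof (induction "dim V" arbitrary: V rule: less_induct)
  case less
  show ?case
  proof (cases "V = {0}")
    case True
    then show ?thesis by (intro exI[of _ "{}"]) (auto simp: orthonormal_def)
  next
    case False
    obtain u where uV: "u \<in> V" and nu: "norm u = 1" and eig: "A *v u = (u \<bullet> (A *v u)) *\<^sub>R u"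
      using symmetric_max_eigenvector_on_subspace[OF sym less.prems(1) False less.prems(2)] by blast
    have uu: "u \<bullet> u = 1" using nu by (simp add: norm_eq_1)
    define V' where "V' = {w\<in>V. u \<bullet> w = 0}"
    note V' = symmetric_invariant_orthogonal_complement[OF sym less.prems eig, folded V'_def]
    have "V' \<subset> V" using uV uu unfolding V'_def by force
    then have "dim V' < dim V"
      using dim_psubset[of V' V] V'(1) less.prems(1) by (simp add: span_eq_iff[THEN iffD2])
    then obtain U' where U': "orthonormal U'" "U' \<subseteq> V'" "V' \<subseteq> span U'"
        "\<forall>u\<in>U'. A *v u = (u \<bullet> (A *v u)) *\<^sub>R u"
      using less.hyps[OF _ V'] by blast
    have "u \<notin> U'" using U'(2) uu by (auto simp: V'_def)
    moreover have "\<forall>w\<in>U'. u \<bullet> w = 0 \<and> w \<bullet> u = 0" using U'(2) by (auto simp: V'_def inner_commute)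
    ultimately have "orthonormal (insert u U')"
      using U'(1) uu unfolding orthonormal_def by auto
    moreover have "V \<subseteq> span (insert u U')"
      using span_insert_orthogonal_complement[OF less.prems(1) uV uu] U'(3) by (simp add: V'_def)
    ultimately show ?thesis using uV U'(2,4) eig by (intro exI[of _ "insert u U'"]) (auto simp: V'_def)
  qed
qed

lemma symmetric_orthonormal_eigenbasis:
  fixes A :: "real^'n^'n"
  assumes "transpose A = A"
  obtains U where "orthonormal U" "span U = UNIV" "\<And>u. u \<in> U \<Longrightarrow> A *v u = (u \<bullet> (A *v u)) *\<^sub>R u"
  using symmetric_orthonormal_eigenbasis_of_subspace[OF assms, of UNIV] by auto

lemma orthonormal_inner_sum:
  assumes "orthonormal U" "u \<in> U"
  shows "u \<bullet> (\<Sum>w\<in>U. c w *\<^sub>R w) = c u"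
proof -
  have "u \<bullet> (\<Sum>w\<in>U. c w *\<^sub>R w) = (\<Sum>w\<in>U. c w * (u \<bullet> w))"
    by (simp add: inner_sum_right)
  also have "\<dots> = (\<Sum>w\<in>U. if w = u then c w else 0)"
    using assms unfolding orthonormal_def by (intro sum.cong) auto
  also have "\<dots> = c u" using assms unfolding orthonormal_def by simp
  finally show ?thesis .
qed

lemma orthonormal_expansion:
  assumes "orthonormal U" "span U = UNIV"
  shows "(\<Sum>u\<in>U. (u \<bullet> x) *\<^sub>R u) = x"
proof -
  have "pairwise orthogonal U" "\<And>u. u \<in> U \<Longrightarrow> norm u = 1"
    using assms(1) by (auto simp: orthonormal_def pairwise_def orthogonal_def norm_eq_1)
  then show ?thesis
    using orthonormal_basis_expand[of U x] assms by (simp add: orthonormal_def inner_commute)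
qed

definition outer :: "real^'n \<Rightarrow> real^'m \<Rightarrow> real^'m^'n" where
  "outer u v = (\<chi> i j. u$i * v$j)"

lemma outer_mult_vector: "outer u v *v x = (v \<bullet> x) *\<^sub>R u"
  by (simp add: outer_def matrix_vector_mult_def vec_eq_iff inner_vec_def sum_distrib_left algebra_simps)

lemma transpose_outer: "transpose (outer u v) = outer v u"
  by (simp add: outer_def transpose_def vec_eq_iff)

lemma matrix_mult_outer: "A ** outer u w = outer (A *v u) w"
  for A :: "real^'n^'m" and w :: "real^'k"
  by (simp add: outer_def matrix_matrix_mult_def matrix_vector_mult_def vec_eq_iff
      sum_distrib_right mult.assoc)

lemma outer_mult_transpose: "outer u w ** transpose B = outer u (B *v w)"
  for B :: "real^'n^'m" and u :: "real^'k"
  by (simp add: outer_def matrix_matrix_mult_def matrix_vector_mult_def transpose_def vec_eq_iff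
      sum_distrib_left mult.assoc mult.left_commute mult.commute)

lemma scaleR_outer: "c *\<^sub>R outer u w = outer (c *\<^sub>R u) w"
  by (simp add: outer_def vec_eq_iff)

lemma outer_scaleR_right: "outer u (c *\<^sub>R w) = outer (c *\<^sub>R u) w"
  by (simp add: outer_def vec_eq_iff mult.assoc mult.left_commute)

lemma quadratic_form_outer: "x \<bullet> (outer v v *v x) = (v \<bullet> x)\<^sup>2"
  by (simp add: outer_mult_vector power2_eq_square inner_commute)

lemma ones_mat_eq_outer: "ones_mat = outer ones ones"
  by (simp add: ones_mat_def outer_def ones_def)

definition spectral_matrix :: "(real^'n \<Rightarrow> real) \<Rightarrow> (real^'n) set \<Rightarrow> real^'n^'n" where
  "spectral_matrix f U = (\<Sum>u\<in>U. f u *\<^sub>R outer u u)"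

lemma spectral_matrix_mult_vector: "spectral_matrix f U *v x = (\<Sum>u\<in>U. (f u * (u \<bullet> x)) *\<^sub>R u)"
  by (simp add: spectral_matrix_def matrix_vector_mult_sum_left outer_mult_vector
      scaleR_matrix_vector_assoc[symmetric])

lemma transpose_spectral_matrix: "transpose (spectral_matrix f U) = spectral_matrix f U"
  by (simp add: spectral_matrix_def transpose_sum transpose_scalar transpose_outer)

lemma quadratic_form_spectral_matrix: "x \<bullet> (spectral_matrix f U *v x) = (\<Sum>u\<in>U. f u * (u \<bullet> x)\<^sup>2)"
  by (simp add: spectral_matrix_mult_vector inner_sum_right power2_eq_square inner_commute mult.assoc)

lemma spectral_matrix_mult:
  assumes "orthonormal U"
  shows "spectral_matrix f U ** spectral_matrix g U = spectral_matrix (\<lambda>u. f u * g u) U"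
proof -
  have "spectral_matrix f U *v (spectral_matrix g U *v x) = spectral_matrix (\<lambda>u. f u * g u) U *v x"
    for x
    using orthonormal_inner_sum[OF assms, of _ "\<lambda>w. g w * (w \<bullet> x)"]
    by (simp add: spectral_matrix_mult_vector mult.assoc cong: sum.cong)
  then show ?thesis by (simp add: matrix_eq matrix_vector_mul_assoc)
qed

lemma spectral_matrix_eigenbasis:
  assumes "orthonormal U" "span U = UNIV" "\<And>u. u \<in> U \<Longrightarrow> A *v u = (u \<bullet> (A *v u)) *\<^sub>R u"
  shows "spectral_matrix (\<lambda>u. u \<bullet> (A *v u)) U = A"
proof -
  have "spectral_matrix (\<lambda>u. u \<bullet> (A *v u)) U *v x = A *v x" for x
  proof -
    have "spectral_matrix (\<lambda>u. u \<bullet> (A *v u)) U *v x = (\<Sum>u\<in>U. (u \<bullet> x) *\<^sub>R (A *v u))"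
      unfolding spectral_matrix_mult_vector
    proof (intro sum.cong refl)
      fix u assume "u \<in> U"
      then show "((u \<bullet> (A *v u)) * (u \<bullet> x)) *\<^sub>R u = (u \<bullet> x) *\<^sub>R (A *v u)"
        using assms(3)[of u] by (metis mult.commute scaleR_scaleR)
    qed
    also have "\<dots> = A *v (\<Sum>u\<in>U. (u \<bullet> x) *\<^sub>R u)"
      by (simp add: matrix_vector_mult_sum_right matrix_vector_mult_scaleR)
    also have "\<dots> = A *v x" using orthonormal_expansion[OF assms(1,2)] by simp
    finally show ?thesis .
  qed
  then show ?thesis by (simp add: matrix_eq)
qed

lemma psd_sqrt_exists:
  fixes W :: "real^'n^'n"
  assumes sym: "transpose W = W" and psd: "\<And>v. 0 \<le> v \<bullet> (W *v v)"
  shows "\<exists>B. B ** B = W \<and> transpose B = B \<and> (\<forall>v. 0 \<le> v \<bullet> (B *v v))"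
proof -
  obtain U where U: "orthonormal U" "span U = UNIV" "\<And>u. u \<in> U \<Longrightarrow> W *v u = (u \<bullet> (W *v u)) *\<^sub>R u"
    using symmetric_orthonormal_eigenbasis[OF sym] by blast
  define B where "B = spectral_matrix (\<lambda>u. sqrt (u \<bullet> (W *v u))) U"
  have "B ** B = spectral_matrix (\<lambda>u. u \<bullet> (W *v u)) U"
    unfolding B_def spectral_matrix_mult[OF U(1)] using psd by (simp add: spectral_matrix_def)
  also have "\<dots> = W" by (rule spectral_matrix_eigenbasis[OF U])
  finally have "B ** B = W" .
  moreover have "transpose B = B" by (simp add: B_def transpose_spectral_matrix)
  moreover have "0 \<le> v \<bullet> (B *v v)" for v
    unfolding B_def quadratic_form_spectral_matrix using psd by (intro sum_nonneg) auto
  ultimately show ?thesis by blast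
qed

text \<open>If \<open>D u = d u\<close> with \<open>D = B - C\<close>, then \<open>d (u\<bullet>Bu + u\<bullet>Cu) = u\<bullet>(B\<^sup>2 - C\<^sup>2)u = 0\<close>; for
  \<open>d \<noteq> 0\<close> both nonnegative forms vanish at \<open>u\<close>, hence \<open>Bu = Cu = 0\<close>. So every eigenvalue
  of the symmetric matrix \<open>D\<close> is \<open>0\<close>.\<close>
lemma psd_sqrt_unique:
  fixes B C :: "real^'n^'n"
  assumes sB: "transpose B = B" and pB: "\<And>v. 0 \<le> v \<bullet> (B *v v)"
    and sC: "transpose C = C" and pC: "\<And>v. 0 \<le> v \<bullet> (C *v v)"
    and sq: "B ** B = C ** C"
  shows "B = C"
proof -
  define D where "D = B - C"
  have sD: "transpose D = D" using sB sC by (simp add: D_def transpose_def vec_eq_iff)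
  have Dv: "D *v x = B *v x - C *v x" for x by (simp add: D_def matrix_vector_mult_diff_rdistrib)
  have null: "D *v u = 0" if du: "D *v u = d *\<^sub>R u" for u d
  proof (cases "d = 0")
    case False
    have "u \<bullet> (B *v (D *v u)) + u \<bullet> (D *v (C *v u)) = u \<bullet> ((B ** B) *v u) - u \<bullet> ((C ** C) *v u)"
      by (simp add: Dv matrix_vector_mul_assoc[symmetric] matrix_vector_mult_diff_distrib inner_diff_right)
    also have "\<dots> = 0" using sq by simp
    also have "u \<bullet> (D *v (C *v u)) = d * (u \<bullet> (C *v u))"
      using inner_matrix_vector_symmetric[OF sD, of u "C *v u"] by (simp add: du inner_commute)
    finally have "d * (u \<bullet> (B *v u) + u \<bullet> (C *v u)) = 0"
      by (simp add: du matrix_vector_mult_scaleR algebra_simps)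
    then have "u \<bullet> (B *v u) = 0" "u \<bullet> (C *v u) = 0" using False pB[of u] pC[of u] by auto
    then have "B *v u = 0" "C *v u = 0"
      using psd_form_zero_imp_null[OF sB pB] psd_form_zero_imp_null[OF sC pC] by auto
    then show ?thesis by (simp add: Dv)
  qed (use du in simp)
  obtain U where U: "orthonormal U" "span U = UNIV" "\<And>u. u \<in> U \<Longrightarrow> D *v u = (u \<bullet> (D *v u)) *\<^sub>R u"
    using symmetric_orthonormal_eigenbasis[OF sD] by blast
  have "D = spectral_matrix (\<lambda>u. u \<bullet> (D *v u)) U" by (rule spectral_matrix_eigenbasis[OF U, symmetric])
  also have "\<dots> = 0" using null[OF U(3)] by (simp add: spectral_matrix_def)
  finally show ?thesis by (simp add: D_def)
qed

lemma msqrt_psd_root: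
  fixes W :: "real^'n^'n"
  assumes "transpose W = W" and "\<And>v. 0 \<le> v \<bullet> (W *v v)"
  shows "msqrt W ** msqrt W = W" "transpose (msqrt W) = msqrt W" "\<And>v. 0 \<le> v \<bullet> (msqrt W *v v)"
proof -
  have "\<exists>!B. B ** B = W \<and> transpose B = B \<and> (\<forall>v. 0 \<le> v \<bullet> (B *v v))"
    using psd_sqrt_exists[OF assms] psd_sqrt_unique by metis
  then have "msqrt W ** msqrt W = W \<and> transpose (msqrt W) = msqrt W \<and> (\<forall>v. 0 \<le> v \<bullet> (msqrt W *v v))"
    unfolding msqrt_def by (rule theI')
  then show "msqrt W ** msqrt W = W" "transpose (msqrt W) = msqrt W" "\<And>v. 0 \<le> v \<bullet> (msqrt W *v v)"
    by auto
qed

definition penrose :: "real^'m^'n \<Rightarrow> real^'n^'m \<Rightarrow> bool" where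
  "penrose A X \<longleftrightarrow> A ** X ** A = A \<and> X ** A ** X = X \<and>
                    transpose (A ** X) = A ** X \<and> transpose (X ** A) = X ** A"

lemma penrose_unique:
  assumes X: "penrose A X" and Y: "penrose A Y"
  shows "X = Y"
proof -
  have x1: "A ** X ** A = A" and x2: "X ** A ** X = X" and x3: "transpose (A ** X) = A ** X"
    and x4: "transpose (X ** A) = X ** A" using X by (auto simp: penrose_def)
  have y1: "A ** Y ** A = A" and y2: "Y ** A ** Y = Y" and y3: "transpose (A ** Y) = A ** Y"
    and y4: "transpose (Y ** A) = Y ** A" using Y by (auto simp: penrose_def)
  have tA1: "transpose A = transpose A ** (A ** Y)"
  proof -
    have "transpose A = transpose (A ** Y ** A)" using y1 by simp
    also have "\<dots> = transpose A ** transpose (A ** Y)" by (simp add: matrix_transpose_mul)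
    also have "\<dots> = transpose A ** (A ** Y)" using y3 by simp
    finally show ?thesis .
  qed
  have tA2: "transpose A = (X ** A) ** transpose A"
  proof -
    have "transpose A = transpose (A ** X ** A)" using x1 by simp
    also have "\<dots> = transpose (X ** A) ** transpose A" by (simp add: matrix_transpose_mul matrix_mul_assoc)
    also have "\<dots> = (X ** A) ** transpose A" using x4 by simp
    finally show ?thesis .
  qed
  have "X = X ** (A ** X)" using x2 by (simp add: matrix_mul_assoc)
  also have "\<dots> = X ** transpose (A ** X)" using x3 by simp
  also have "\<dots> = X ** transpose X ** transpose A" by (simp add: matrix_transpose_mul matrix_mul_assoc)
  also have "\<dots> = X ** transpose X ** (transpose A ** (A ** Y))" using tA1 by simp
  also have "\<dots> = X ** (transpose X ** transpose A) ** (A ** Y)" by (simp add: matrix_mul_assoc)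
  also have "\<dots> = X ** (A ** X) ** (A ** Y)" using x3 by (simp add: matrix_transpose_mul[symmetric])
  also have "\<dots> = (X ** A ** X) ** A ** Y" by (simp add: matrix_mul_assoc)
  also have "\<dots> = X ** A ** Y" using x2 by simp
  finally have 1: "X = X ** A ** Y" .
  have "Y = (Y ** A) ** Y" using y2 by (simp add: matrix_mul_assoc)
  also have "\<dots> = transpose (Y ** A) ** Y" using y4 by simp
  also have "\<dots> = transpose A ** transpose Y ** Y" by (simp add: matrix_transpose_mul)
  also have "\<dots> = ((X ** A) ** transpose A) ** transpose Y ** Y" using tA2 by simp
  also have "\<dots> = (X ** A) ** (transpose A ** transpose Y) ** Y" by (simp add: matrix_mul_assoc)
  also have "\<dots> = (X ** A) ** (Y ** A) ** Y" using y4 by (simp add: matrix_transpose_mul[symmetric])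
  also have "\<dots> = X ** A ** (Y ** A ** Y)" by (simp add: matrix_mul_assoc)
  also have "\<dots> = X ** A ** Y" using y2 by simp
  finally have 2: "Y = X ** A ** Y" .
  show ?thesis using 1 2 by simp
qed

lemma pinv_symmetric:
  fixes M :: "real^'t^'t"
  assumes sym: "transpose M = M"
  shows "penrose M (pinv M)" "transpose (pinv M) = pinv M"
proof -
  obtain U where U: "orthonormal U" "span U = UNIV" "\<And>u. u \<in> U \<Longrightarrow> M *v u = (u \<bullet> (M *v u)) *\<^sub>R u"
    using symmetric_orthonormal_eigenbasis[OF sym] by blast
  define l where "l u = u \<bullet> (M *v u)" for u
  define X where "X = spectral_matrix (\<lambda>u. if l u = 0 then 0 else 1 / l u) U"
  define E where "E = spectral_matrix (\<lambda>u. if l u = 0 then 0 else 1) U"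
  have M: "M = spectral_matrix l U"
    using spectral_matrix_eigenbasis[OF U] by (simp add: l_def[abs_def])
  have "M ** X = E" "X ** M = E" "E ** M = M" "E ** X = X"
    unfolding M X_def E_def spectral_matrix_mult[OF U(1)]
    by (auto intro!: arg_cong[where f="\<lambda>f. spectral_matrix f U"])
  then have P: "penrose M X"
    unfolding penrose_def by (simp add: E_def transpose_spectral_matrix)
  then have "pinv M = X"
    unfolding pinv_def penrose_def[symmetric] using penrose_unique by blast
  then show "penrose M (pinv M)" "transpose (pinv M) = pinv M"
    using P by (simp_all add: X_def transpose_spectral_matrix)
qed

lemma orthonormal_parseval:
  assumes "orthonormal U" "span U = UNIV"
  shows "(norm x)\<^sup>2 = (\<Sum>u\<in>U. (u \<bullet> x)\<^sup>2)"
proof -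
  have "spectral_matrix (\<lambda>u. u \<bullet> (mat 1 *v u)) U = mat 1"
    by (rule spectral_matrix_eigenbasis[OF assms]) (use assms(1) in \<open>simp add: orthonormal_def\<close>)
  then have "x \<bullet> (mat 1 *v x) = (\<Sum>u\<in>U. (u \<bullet> (mat 1 *v u)) * (u \<bullet> x)\<^sup>2)"
    by (metis quadratic_form_spectral_matrix)
  also have "\<dots> = (\<Sum>u\<in>U. (u \<bullet> x)\<^sup>2)"
    using assms(1) by (intro sum.cong) (auto simp: orthonormal_def)
  finally show ?thesis by (simp add: power2_norm_eq_inner)
qed

lemma eigenbasis_real_eigenvalues:
  assumes sym: "transpose A = A"
    and U: "orthonormal U" "span U = UNIV" "\<And>u. u \<in> U \<Longrightarrow> A *v u = (u \<bullet> (A *v u)) *\<^sub>R u"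
  shows "real_eigenvalues A = (\<lambda>u. u \<bullet> (A *v u)) ` U"
proof (intro set_eqI iffI)
  fix l assume "l \<in> real_eigenvalues A"
  then obtain v where v: "v \<noteq> 0" "A *v v = l *\<^sub>R v" by (auto simp: real_eigenvalues_def)
  have "\<exists>u\<in>U. u \<bullet> v \<noteq> 0"
  proof (rule ccontr)
    assume "\<not> (\<exists>u\<in>U. u \<bullet> v \<noteq> 0)"
    then have "(\<Sum>u\<in>U. (u \<bullet> v) *\<^sub>R u) = 0" by simp
    then show False using orthonormal_expansion[OF U(1,2), of v] v(1) by simp
  qed
  then obtain u where u: "u \<in> U" "u \<bullet> v \<noteq> 0" by blast
  have "(u \<bullet> (A *v u)) * (u \<bullet> v) = (A *v u) \<bullet> v"
    by (subst U(3)[OF u(1)]) simp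
  also have "\<dots> = l * (u \<bullet> v)"
    by (simp add: inner_matrix_vector_symmetric[OF sym] v(2))
  finally have "l = u \<bullet> (A *v u)" using u(2) by simp
  then show "l \<in> (\<lambda>u. u \<bullet> (A *v u)) ` U" using u(1) by blast
next
  fix l assume "l \<in> (\<lambda>u. u \<bullet> (A *v u)) ` U"
  then obtain u where "u \<in> U" "l = u \<bullet> (A *v u)" by blast
  moreover have "u \<bullet> u = 1" using \<open>u \<in> U\<close> U(1) by (simp add: orthonormal_def)
  then have "u \<noteq> 0" by auto
  ultimately show "l \<in> real_eigenvalues A" using U(3) by (auto simp: real_eigenvalues_def)
qed

lemma eigenbasis_quadratic_form:
  assumes "orthonormal U" "span U = UNIV" "\<And>u. u \<in> U \<Longrightarrow> A *v u = (u \<bullet> (A *v u)) *\<^sub>R u"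
  shows "x \<bullet> (A *v x) = (\<Sum>u\<in>U. (u \<bullet> (A *v u)) * (u \<bullet> x)\<^sup>2)"
  using quadratic_form_spectral_matrix[of x "\<lambda>u. u \<bullet> (A *v u)" U]
  by (simp only: spectral_matrix_eigenbasis[OF assms])

lemma spanning_set_nonempty: "span U = (UNIV :: (real^'n) set) \<Longrightarrow> U \<noteq> {}"
proof
  assume "span U = UNIV" "U = {}"
  then have "(ones :: real^'n) \<in> {0}" by (metis UNIV_I span_empty)
  then show False by (simp add: ones_def vec_eq_iff)
qed

lemma quadratic_form_le_lambda_max:
  fixes A :: "real^'n^'n"
  assumes sym: "transpose A = A"
  shows "x \<bullet> (A *v x) \<le> lambda_max A * (norm x)\<^sup>2"
proof -
  obtain U where U: "orthonormal U" "span U = UNIV" "\<And>u. u \<in> U \<Longrightarrow> A *v u = (u \<bullet> (A *v u)) *\<^sub>R u"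
    using symmetric_orthonormal_eigenbasis[OF sym] by blast
  have "finite U" using U(1) by (simp add: orthonormal_def)
  have "x \<bullet> (A *v x) = (\<Sum>u\<in>U. (u \<bullet> (A *v u)) * (u \<bullet> x)\<^sup>2)"
    by (rule eigenbasis_quadratic_form[OF U])
  also have "\<dots> \<le> (\<Sum>u\<in>U. lambda_max A * (u \<bullet> x)\<^sup>2)"
  proof (intro sum_mono mult_right_mono)
    fix u assume "u \<in> U"
    then show "u \<bullet> (A *v u) \<le> lambda_max A"
      using eigenbasis_real_eigenvalues[OF sym U] \<open>finite U\<close> by (simp add: lambda_max_def)
  qed simp
  also have "\<dots> = lambda_max A * (norm x)\<^sup>2"
    by (simp add: orthonormal_parseval[OF U(1,2)] sum_distrib_left)
  finally show ?thesis .
qed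

lemma lambda_min_le_quadratic_form:
  fixes A :: "real^'n^'n"
  assumes sym: "transpose A = A"
  shows "lambda_min A * (norm x)\<^sup>2 \<le> x \<bullet> (A *v x)"
proof -
  obtain U where U: "orthonormal U" "span U = UNIV" "\<And>u. u \<in> U \<Longrightarrow> A *v u = (u \<bullet> (A *v u)) *\<^sub>R u"
    using symmetric_orthonormal_eigenbasis[OF sym] by blast
  have "finite U" using U(1) by (simp add: orthonormal_def)
  have "lambda_min A * (norm x)\<^sup>2 = (\<Sum>u\<in>U. lambda_min A * (u \<bullet> x)\<^sup>2)"
    by (simp add: orthonormal_parseval[OF U(1,2)] sum_distrib_left)
  also have "\<dots> \<le> (\<Sum>u\<in>U. (u \<bullet> (A *v u)) * (u \<bullet> x)\<^sup>2)"
  proof (intro sum_mono mult_right_mono)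
    fix u assume "u \<in> U"
    then show "lambda_min A \<le> u \<bullet> (A *v u)"
      using eigenbasis_real_eigenvalues[OF sym U] \<open>finite U\<close> by (simp add: lambda_min_def)
  qed simp
  also have "\<dots> = x \<bullet> (A *v x)"
    by (rule eigenbasis_quadratic_form[OF U, symmetric])
  finally show ?thesis .
qed

lemma lambda_max_psd_nonneg:
  fixes A :: "real^'n^'n"
  assumes sym: "transpose A = A" and psd: "\<And>v. 0 \<le> v \<bullet> (A *v v)"
  shows "0 \<le> lambda_max A"
proof -
  obtain U where U: "orthonormal U" "span U = UNIV" "\<And>u. u \<in> U \<Longrightarrow> A *v u = (u \<bullet> (A *v u)) *\<^sub>R u"
    using symmetric_orthonormal_eigenbasis[OF sym] by blast
  obtain u where "u \<in> U" using spanning_set_nonempty[OF U(2)] by blast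
  moreover have "finite U" using U(1) by (simp add: orthonormal_def)
  ultimately have "u \<bullet> (A *v u) \<le> lambda_max A"
    using eigenbasis_real_eigenvalues[OF sym U] by (simp add: lambda_max_def)
  then show ?thesis using psd[of u] by linarith
qed

lemma real_eigenvalues_similar:
  fixes A P Q :: "real^'n^'n"
  assumes "P ** Q = mat 1" "Q ** P = mat 1"
  shows "real_eigenvalues (P ** A ** Q) = real_eigenvalues A"
proof -
  have sub: "real_eigenvalues (P ** A ** Q) \<subseteq> real_eigenvalues A"
    if PQ: "P ** Q = mat 1" "Q ** P = mat 1" for A P Q :: "real^'n^'n"
  proof
    fix l assume "l \<in> real_eigenvalues (P ** A ** Q)"
    then obtain v where v: "v \<noteq> 0" "(P ** A ** Q) *v v = l *\<^sub>R v" by (auto simp: real_eigenvalues_def)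
    have "P *v (Q *v v) = v" using PQ(1) by (simp add: matrix_vector_mul_assoc)
    then have "Q *v v \<noteq> 0" using v(1) by auto
    moreover have "A *v (Q *v v) = l *\<^sub>R (Q *v v)"
      using arg_cong[OF v(2), of "\<lambda>w. Q *v w"] PQ(2)
      by (simp add: matrix_vector_mul_assoc matrix_mul_assoc matrix_vector_mult_scaleR)
    ultimately show "l \<in> real_eigenvalues A" by (auto simp: real_eigenvalues_def)
  qed
  have "Q ** (P ** A ** Q) ** P = (Q ** P) ** A ** (Q ** P)" by (simp only: matrix_mul_assoc)
  then have "A = Q ** (P ** A ** Q) ** P" using assms(2) by simp
  then have "real_eigenvalues A \<subseteq> real_eigenvalues (P ** A ** Q)"
    using sub[of Q P "P ** A ** Q"] assms by simp
  with sub[OF assms] show ?thesis by blast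
qed

lemma pos_def_mat_symmetric: "pos_def_mat W \<Longrightarrow> transpose W = W"
  by (simp add: pos_def_mat_def)

lemma pos_def_mat_psd: "pos_def_mat W \<Longrightarrow> 0 \<le> v \<bullet> (W *v v)"
  by (cases "v = 0") (auto simp: pos_def_mat_def)

lemma pos_def_mat_inverse:
  fixes W :: "real^'n^'n"
  assumes pd: "pos_def_mat W"
  shows "W ** matrix_inv W = mat 1" "matrix_inv W ** W = mat 1"
proof -
  have "inj ((*v) W)"
  proof (rule injI)
    fix x y assume "W *v x = W *v y"
    then have "(x - y) \<bullet> (W *v (x - y)) = 0" by (simp add: matrix_vector_mult_diff_distrib)
    then have "x - y = 0" using pd unfolding pos_def_mat_def by (metis less_irrefl)
    then show "x = y" by simp
  qed
  then obtain B where "B ** W = mat 1" using matrix_left_invertible_injective by blast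
  then have "\<exists>B. W ** B = mat 1 \<and> B ** W = mat 1" using matrix_left_right_inverse by blast
  then have "W ** matrix_inv W = mat 1 \<and> matrix_inv W ** W = mat 1"
    unfolding matrix_inv_def by (rule someI_ex)
  then show "W ** matrix_inv W = mat 1" "matrix_inv W ** W = mat 1" by auto
qed

lemma symmetric_matrix_inv:
  fixes W :: "real^'n^'n"
  assumes pd: "pos_def_mat W"
  shows "transpose (matrix_inv W) = matrix_inv W"
proof -
  have "transpose (matrix_inv W) ** W = mat 1"
    using arg_cong[OF pos_def_mat_inverse(1)[OF pd], of transpose] pos_def_mat_symmetric[OF pd]
    by (simp add: matrix_transpose_mul)
  then have "transpose (matrix_inv W) = matrix_inv W ** (W ** transpose (matrix_inv W))"
    using pos_def_mat_inverse(2)[OF pd] matrix_left_right_inverse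
    by (metis matrix_mul_assoc matrix_mul_lid)
  also have "\<dots> = matrix_inv W"
    using \<open>transpose (matrix_inv W) ** W = mat 1\<close> matrix_left_right_inverse by (metis matrix_mul_rid)
  finally show ?thesis .
qed

lemma psd_matrix_inv:
  assumes pd: "pos_def_mat W"
  shows "0 \<le> v \<bullet> (matrix_inv W *v v)"
proof -
  have "v \<bullet> (matrix_inv W *v v) = (matrix_inv W *v v) \<bullet> (W *v (matrix_inv W *v v))"
    using pos_def_mat_inverse(1)[OF pd] by (simp add: matrix_vector_mul_assoc inner_commute)
  then show ?thesis using pos_def_mat_psd[OF pd] by simp
qed

lemma msqrt_mult_matrix_inv:
  fixes W :: "real^'n^'n"
  assumes pd: "pos_def_mat W"
  defines "B \<equiv> msqrt W" and "C \<equiv> msqrt W ** matrix_inv W"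
  shows "B ** C = mat 1" "C ** B = mat 1" "transpose C = C" "C ** C = matrix_inv W"
proof -
  define Wi where "Wi = matrix_inv W"
  have BB: "B ** B = W" and sB: "transpose B = B"
    using msqrt_psd_root[OF pos_def_mat_symmetric[OF pd] pos_def_mat_psd[OF pd]] by (auto simp: B_def)
  have WWi: "W ** Wi = mat 1" and WiW: "Wi ** W = mat 1" and sWi: "transpose Wi = Wi"
    using pos_def_mat_inverse[OF pd] symmetric_matrix_inv[OF pd] by (auto simp: Wi_def)
  show BC: "B ** C = mat 1" using BB WWi by (simp add: C_def B_def Wi_def matrix_mul_assoc)
  then show "C ** B = mat 1" using matrix_left_right_inverse by blast
  have "Wi ** B = Wi ** B ** (W ** Wi)" using WWi by simp
  also have "\<dots> = Wi ** (B ** B ** B) ** Wi" by (simp add: BB[symmetric] matrix_mul_assoc)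
  also have "\<dots> = (Wi ** W) ** B ** Wi" by (simp add: BB[symmetric] matrix_mul_assoc)
  also have "\<dots> = B ** Wi" using WiW by simp
  finally have comm: "Wi ** B = B ** Wi" .
  show "transpose C = C" using comm sB sWi by (simp add: C_def B_def Wi_def matrix_transpose_mul)
  have "C ** C = B ** (Wi ** B) ** Wi" by (simp add: C_def B_def Wi_def matrix_mul_assoc)
  also have "\<dots> = (B ** B) ** (Wi ** Wi)" by (simp add: comm matrix_mul_assoc)
  also have "\<dots> = (W ** Wi) ** Wi" using BB by (simp add: matrix_mul_assoc)
  finally show "C ** C = matrix_inv W" using WWi by (simp add: Wi_def)
qed

lemma quadratic_form_le_lambda_max_msqrt:
  fixes W M :: "real^'n^'n"
  assumes pd: "pos_def_mat W" and sM: "transpose M = M"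
  shows "y \<bullet> (M *v y) \<le> lambda_max (msqrt W ** M ** msqrt W) * (y \<bullet> (matrix_inv W *v y))"
proof -
  define B where "B = msqrt W"
  define C where "C = msqrt W ** matrix_inv W"
  note BC = msqrt_mult_matrix_inv[OF pd, folded B_def C_def]
  have sB: "transpose B = B"
    using msqrt_psd_root[OF pos_def_mat_symmetric[OF pd] pos_def_mat_psd[OF pd]] by (simp add: B_def)
  define z where "z = C *v y"
  have y: "y = B *v z" using BC(1) by (simp add: z_def matrix_vector_mul_assoc)
  have "y \<bullet> (M *v y) = z \<bullet> ((B ** M ** B) *v z)"
    unfolding y using inner_matrix_vector_symmetric[OF sB, of z "M *v (B *v z)"]
    by (simp add: matrix_vector_mul_assoc matrix_mul_assoc)
  also have "\<dots> \<le> lambda_max (B ** M ** B) * (norm z)\<^sup>2"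
    by (rule quadratic_form_le_lambda_max) (simp add: sB sM matrix_transpose_mul matrix_mul_assoc)
  also have "(norm z)\<^sup>2 = y \<bullet> (matrix_inv W *v y)"
    using inner_matrix_vector_symmetric[OF BC(3), of y "C *v y"] BC(4)
    by (simp add: z_def power2_norm_eq_inner matrix_vector_mul_assoc)
  finally show ?thesis by (simp add: B_def)
qed

lemma lambda_max_msqrt_congruence_nonneg:
  fixes W M :: "real^'n^'n"
  assumes pd: "pos_def_mat W" and sM: "transpose M = M" and pM: "\<And>v. 0 \<le> v \<bullet> (M *v v)"
  shows "0 \<le> lambda_max (msqrt W ** M ** msqrt W)"
proof (rule lambda_max_psd_nonneg)
  have sB: "transpose (msqrt W) = msqrt W"
    using msqrt_psd_root[OF pos_def_mat_symmetric[OF pd] pos_def_mat_psd[OF pd]] by simp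
  then show "transpose (msqrt W ** M ** msqrt W) = msqrt W ** M ** msqrt W"
    using sM by (simp add: matrix_transpose_mul matrix_mul_assoc)
  show "0 \<le> v \<bullet> ((msqrt W ** M ** msqrt W) *v v)" for v
    using inner_matrix_vector_symmetric[OF sB, of v "M *v (msqrt W *v v)"] pM[of "msqrt W *v v"]
    by (simp add: matrix_vector_mul_assoc matrix_mul_assoc)
qed

lemma lambda_min_mult_le_quadratic_form:
  fixes W K :: "real^'n^'n"
  assumes pd: "pos_def_mat W" and sK: "transpose K = K"
  shows "lambda_min (K ** W) * (y \<bullet> (matrix_inv W *v y)) \<le> y \<bullet> (K *v y)"
proof -
  define B where "B = msqrt W"
  define C where "C = msqrt W ** matrix_inv W"
  note BC = msqrt_mult_matrix_inv[OF pd, folded B_def C_def]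
  have BB: "B ** B = W" and sB: "transpose B = B"
    using msqrt_psd_root[OF pos_def_mat_symmetric[OF pd] pos_def_mat_psd[OF pd]] by (auto simp: B_def)
  have "K ** W = C ** (B ** K ** B) ** B"
  proof -
    have "C ** (B ** K ** B) ** B = (C ** B) ** K ** (B ** B)" by (simp only: matrix_mul_assoc)
    then show ?thesis using BC(2) BB by simp
  qed
  then have "lambda_min (K ** W) = lambda_min (B ** K ** B)"
    unfolding lambda_min_def using real_eigenvalues_similar[OF BC(2,1)] by simp
  define z where "z = C *v y"
  have y: "y = B *v z" using BC(1) by (simp add: z_def matrix_vector_mul_assoc)
  have "(norm z)\<^sup>2 = y \<bullet> (matrix_inv W *v y)"
    using inner_matrix_vector_symmetric[OF BC(3), of y "C *v y"] BC(4)
    by (simp add: z_def power2_norm_eq_inner matrix_vector_mul_assoc)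
  then have "lambda_min (K ** W) * (y \<bullet> (matrix_inv W *v y)) = lambda_min (B ** K ** B) * (norm z)\<^sup>2"
    using \<open>lambda_min (K ** W) = lambda_min (B ** K ** B)\<close> by simp
  also have "\<dots> \<le> z \<bullet> ((B ** K ** B) *v z)"
    by (rule lambda_min_le_quadratic_form) (simp add: sB sK matrix_transpose_mul matrix_mul_assoc)
  also have "\<dots> = y \<bullet> (K *v y)"
    unfolding y using inner_matrix_vector_symmetric[OF sB, of z "K *v (B *v z)"]
    by (simp add: matrix_vector_mul_assoc matrix_mul_assoc)
  finally show ?thesis .
qed

section \<open>Row quadratic forms and the sketch projections\<close>

definition row_form :: "real^'n^'n \<Rightarrow> real^'n^'d \<Rightarrow> real" where
  "row_form M X = (\<Sum>r\<in>UNIV. X$r \<bullet> (M *v X$r))"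

lemma trace_eq_row_form: "trace (X ** M ** transpose X) = row_form M X"
  for X :: "real^'n^'d" and M :: "real^'n^'n"
  unfolding row_form_def
  by (simp add: trace_def matrix_matrix_mult_def transpose_def matrix_vector_mult_def inner_vec_def
      sum_distrib_left sum_distrib_right mult.assoc mult.left_commute)
    (intro sum.cong[OF refl] sum.swap)

lemma row_form_nonneg: "(\<And>v. 0 \<le> v \<bullet> (M *v v)) \<Longrightarrow> 0 \<le> row_form M X"
  unfolding row_form_def by (simp add: sum_nonneg)

lemma wnorm_sq_eq_row_form:
  assumes pd: "pos_def_mat W"
  shows "(wnorm W X)\<^sup>2 = row_form (matrix_inv W) X"
  using row_form_nonneg[of "matrix_inv W" X] psd_matrix_inv[OF pd]
  by (simp add: wnorm_def trace_eq_row_form)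

lemma row_matrix_mult: "(X ** P) $ r = transpose P *v (X $ r)"
  for X :: "real^'n^'d" and P :: "real^'m^'n"
  by (simp add: matrix_matrix_mult_def transpose_def matrix_vector_mult_def vec_eq_iff mult.commute)

lemma PiS_mult_matrix_inv:
  fixes W :: "real^'n^'n" and S :: "real^'t^'n"
  assumes pd: "pos_def_mat W"
  defines "H \<equiv> PiS W S ** matrix_inv W"
  shows "H = S ** pinv (transpose S ** W ** S) ** transpose S" "transpose H = H"
    "matrix_inv W ** transpose (PiS W S) = H" "PiS W S ** matrix_inv W ** transpose (PiS W S) = H"
proof -
  define M where "M = transpose S ** W ** S"
  define X where "X = pinv M"
  have sW: "transpose W = W" and sWi: "transpose (matrix_inv W) = matrix_inv W"
    using pos_def_mat_symmetric[OF pd] symmetric_matrix_inv[OF pd] .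
  have "transpose M = M" using sW by (simp add: M_def matrix_transpose_mul matrix_mul_assoc)
  then have pen: "penrose M X" and sX: "transpose X = X" using pinv_symmetric by (auto simp: X_def)
  have P: "PiS W S = S ** X ** transpose S ** W" by (simp add: PiS_def X_def M_def)
  have H: "H = S ** X ** transpose S"
    using pos_def_mat_inverse(1)[OF pd] by (simp add: H_def P matrix_mul_assoc[symmetric])
  then show "H = S ** pinv (transpose S ** W ** S) ** transpose S" by (simp add: X_def M_def)
  show sH: "transpose H = H" using sX by (simp add: H matrix_transpose_mul matrix_mul_assoc)
  show HT: "matrix_inv W ** transpose (PiS W S) = H"
    using sWi sH by (simp add: H_def matrix_transpose_mul)
  have "PiS W S ** (matrix_inv W ** transpose (PiS W S)) = S ** (X ** M ** X) ** transpose S"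
    unfolding HT by (simp add: H P M_def matrix_mul_assoc)
  also have "\<dots> = H" using pen by (simp add: penrose_def H)
  finally show "PiS W S ** matrix_inv W ** transpose (PiS W S) = H" by (simp add: matrix_mul_assoc)
qed

lemma quadratic_form_projected_update:
  fixes P Wi H :: "real^'n^'n"
  assumes HT: "Wi ** transpose P = H" and PHT: "P ** Wi ** transpose P = H"
    and sH: "transpose H = H" and sWi: "transpose Wi = Wi"
  shows "(y + transpose P *v (z - y)) \<bullet> (Wi *v (y + transpose P *v (z - y)))
       = y \<bullet> (Wi *v y) - y \<bullet> (H *v y) + z \<bullet> (H *v z)"
proof -
  define d where "d = z - y"
  define b where "b = transpose P *v d"
  have yb: "y \<bullet> (Wi *v b) = y \<bullet> (H *v d)"
    using HT by (simp add: b_def matrix_vector_mul_assoc del: transpose_matrix_vector)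
  have by': "b \<bullet> (Wi *v y) = y \<bullet> (H *v d)"
    using inner_matrix_vector_symmetric[OF sWi, of b y] yb by (simp add: inner_commute)
  have bb: "b \<bullet> (Wi *v b) = d \<bullet> (H *v d)"
    using inner_matrix_vector_transpose[of "transpose P" d "Wi *v b"] PHT
    by (simp add: b_def matrix_vector_mul_assoc matrix_mul_assoc del: transpose_matrix_vector)
  have "z \<bullet> (H *v y) = y \<bullet> (H *v z)"
    using inner_matrix_vector_symmetric[OF sH, of z y] by (simp add: inner_commute)
  then have "y \<bullet> (Wi *v y) + y \<bullet> (Wi *v b) + b \<bullet> (Wi *v y) + b \<bullet> (Wi *v b)
      = y \<bullet> (Wi *v y) - y \<bullet> (H *v y) + z \<bullet> (H *v z)"
    unfolding yb by' bb d_def by (simp add: matrix_vector_mult_diff_distrib inner_diff_left inner_diff_right)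
  then show ?thesis
    by (simp add: b_def d_def matrix_vector_right_distrib inner_add_left inner_add_right)
qed

lemma wnorm_sq_jacobian_update:
  fixes W :: "real^'n^'n" and S :: "real^'t^'n" and Y Z :: "real^'n^'d"
  assumes pd: "pos_def_mat W"
  defines "H \<equiv> PiS W S ** matrix_inv W"
  shows "(wnorm W (Y + (Z - Y) ** PiS W S))\<^sup>2
           = row_form (matrix_inv W) Y - row_form H Y + row_form H Z"
proof -
  have "(Y + (Z - Y) ** PiS W S) $ r = Y$r + transpose (PiS W S) *v (Z$r - Y$r)" for r
    by (simp add: row_matrix_mult)
  then have "(wnorm W (Y + (Z - Y) ** PiS W S))\<^sup>2
      = (\<Sum>r\<in>UNIV. (Y$r + transpose (PiS W S) *v (Z$r - Y$r))
                   \<bullet> (matrix_inv W *v (Y$r + transpose (PiS W S) *v (Z$r - Y$r))))"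
    by (simp only: wnorm_sq_eq_row_form[OF pd] row_form_def)
  also have "\<dots> = (\<Sum>r\<in>UNIV. Y$r \<bullet> (matrix_inv W *v Y$r) - Y$r \<bullet> (H *v Y$r) + Z$r \<bullet> (H *v Z$r))"
    using PiS_mult_matrix_inv(2-4)[OF pd, of S] symmetric_matrix_inv[OF pd]
    by (intro sum.cong refl quadratic_form_projected_update) (simp_all add: H_def)
  finally show ?thesis by (simp add: row_form_def sum.distrib sum_subtractf)
qed

section \<open>Moments of the sketch\<close>

lemma norm_sq_matrix_vector_rows: "(norm (M *v v))\<^sup>2 = (\<Sum>r\<in>UNIV. (M$r \<bullet> v)\<^sup>2)"
  for M :: "real^'n^'d"
  unfolding power2_norm_eq_inner by (simp add: inner_vec_def matrix_vector_mul_component power2_eq_square)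

lemma bounded_linear_bilinear_form: "bounded_linear (\<lambda>Q::real^'n^'n. x \<bullet> (Q *v y))"
proof -
  have "linear (\<lambda>Q::real^'n^'n. x \<bullet> (Q *v y))"
    by (rule linearI) (simp_all add: matrix_vector_mult_add_rdistrib inner_add_right
        scaleR_matrix_vector_assoc[symmetric])
  then show ?thesis by (simp add: linear_conv_bounded_linear)
qed

locale sketch =
  fixes W :: "real^'n::finite^'n" and D :: "(real^'t::finite^'n) measure"
    and \<theta> :: "real^'t^'n \<Rightarrow> real"
  assumes W_pd: "pos_def_mat W" and D_prob: "prob_space D"
    and int_thetaPie: "integrable D (\<lambda>S. \<theta> S *\<^sub>R (PiS W S *v ones))"
    and unbiased: "integral\<^sup>L D (\<lambda>S. \<theta> S *\<^sub>R (PiS W S *v ones)) = ones"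
    and int_Pi: "integrable D (\<lambda>S. PiS W S)"
    and int_second: "integrable D (\<lambda>S. (\<theta> S)\<^sup>2 *\<^sub>R (PiS W S ** ones_mat ** transpose (PiS W S)))"
begin

sublocale prob_space D by (rule D_prob)

definition thetaPie :: "real^'t^'n \<Rightarrow> real^'n" where
  "thetaPie S = \<theta> S *\<^sub>R (PiS W S *v ones)"

definition outer_moment :: "real^'n^'n" where
  "outer_moment = (\<integral>S. (\<theta> S)\<^sup>2 *\<^sub>R (PiS W S ** ones_mat ** transpose (PiS W S)) \<partial>D)"

abbreviation "H S \<equiv> PiS W S ** matrix_inv W"
abbreviation "EH \<equiv> integral\<^sup>L D (\<lambda>S. PiS W S) ** matrix_inv W"

lemma thetaPie_outer: "(\<theta> S)\<^sup>2 *\<^sub>R (PiS W S ** ones_mat ** transpose (PiS W S)) = outer (thetaPie S) (thetaPie S)"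
proof -
  have "PiS W S ** ones_mat ** transpose (PiS W S) = outer (PiS W S *v ones) (PiS W S *v ones)"
    by (simp add: ones_mat_eq_outer matrix_mult_outer outer_mult_transpose)
  then show ?thesis by (simp add: thetaPie_def scaleR_outer outer_scaleR_right power2_eq_square)
qed

lemma integral_inner_thetaPie:
  shows "integrable D (\<lambda>S. c \<bullet> thetaPie S)" and "(\<integral>S. c \<bullet> thetaPie S \<partial>D) = c \<bullet> ones"
  using integrable_inner_right[OF int_thetaPie] integral_inner_right[OF int_thetaPie] unbiased
  by (simp_all add: thetaPie_def[abs_def])

lemma integral_inner_thetaPie_sq:
  shows "integrable D (\<lambda>S. (x \<bullet> thetaPie S)\<^sup>2)" and "(\<integral>S. (x \<bullet> thetaPie S)\<^sup>2 \<partial>D) = x \<bullet> (outer_moment *v x)"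
proof -
  have q: "x \<bullet> (outer (thetaPie S) (thetaPie S) *v x) = (x \<bullet> thetaPie S)\<^sup>2" for S
    by (simp add: quadratic_form_outer inner_commute)
  note lin = integrable_bounded_linear[OF bounded_linear_bilinear_form[of x x] int_second]
    integral_bounded_linear[OF bounded_linear_bilinear_form[of x x] int_second]
  show "integrable D (\<lambda>S. (x \<bullet> thetaPie S)\<^sup>2)"
    using lin(1) by (simp only: thetaPie_outer q)
  show "(\<integral>S. (x \<bullet> thetaPie S)\<^sup>2 \<partial>D) = x \<bullet> (outer_moment *v x)"
    using lin(2) by (simp only: thetaPie_outer q outer_moment_def)
qed

lemma integral_row_form_H:
  shows "integrable D (\<lambda>S. row_form (H S) Y)" and "(\<integral>S. row_form (H S) Y \<partial>D) = row_form EH Y"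
proof -
  have H: "x \<bullet> ((P ** matrix_inv W) *v x) = x \<bullet> (P *v (matrix_inv W *v x))" for x and P :: "real^'n^'n"
    by (simp add: matrix_vector_mul_assoc)
  note lin = integrable_bounded_linear[OF bounded_linear_bilinear_form int_Pi]
    integral_bounded_linear[OF bounded_linear_bilinear_form int_Pi]
  show "integrable D (\<lambda>S. row_form (H S) Y)"
    unfolding row_form_def H using lin(1) by (intro Bochner_Integration.integrable_sum) auto
  show "(\<integral>S. row_form (H S) Y \<partial>D) = row_form EH Y"
    unfolding row_form_def H using lin by (simp add: Bochner_Integration.integral_sum)
qed

lemma integral_norm_sq_affine_thetaPie:
  fixes M :: "real^'n^'d" and y :: "real^'d"
  shows "integrable D (\<lambda>S. (norm (y + M *v thetaPie S))\<^sup>2)"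
    and "(\<integral>S. (norm (y + M *v thetaPie S))\<^sup>2 \<partial>D)
           = (norm y)\<^sup>2 + 2 * (y \<bullet> (M *v ones)) + row_form outer_moment M"
proof -
  have eq: "(norm (y + M *v thetaPie S))\<^sup>2
      = (norm y)\<^sup>2 + 2 * ((transpose M *v y) \<bullet> thetaPie S) + (\<Sum>r\<in>UNIV. (M$r \<bullet> thetaPie S)\<^sup>2)" for S
    using inner_matrix_vector_transpose[of M "thetaPie S" y]
    by (simp add: power2_norm_eq_inner[symmetric] norm_sq_matrix_vector_rows[symmetric])
      (simp add: power2_norm_eq_inner inner_add_left inner_add_right inner_commute)
  show "integrable D (\<lambda>S. (norm (y + M *v thetaPie S))\<^sup>2)"
    unfolding eq using integral_inner_thetaPie(1) integral_inner_thetaPie_sq(1) by auto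
  have "y \<bullet> (M *v ones) = (transpose M *v y) \<bullet> ones"
    using inner_matrix_vector_transpose[of M ones y] by (simp add: inner_commute)
  then show "(\<integral>S. (norm (y + M *v thetaPie S))\<^sup>2 \<partial>D)
           = (norm y)\<^sup>2 + 2 * (y \<bullet> (M *v ones)) + row_form outer_moment M"
    unfolding eq row_form_def using integral_inner_thetaPie integral_inner_thetaPie_sq
    by (simp add: Bochner_Integration.integral_sum prob_space.prob_space[OF D_prob])
qed

lemma symmetric_EH: "transpose EH = EH"
proof -
  have bl: "bounded_linear (\<lambda>P::real^'n^'n. transpose (P ** matrix_inv W))"
    using bounded_linear_compose[OF bounded_linear_transpose bounded_linear_matrix_mult_right[of "matrix_inv W"]]
    by (simp add: o_def)
  have "transpose EH = (\<integral>S. transpose (H S) \<partial>D)"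
    using integral_bounded_linear[OF bl int_Pi] by simp
  also have "\<dots> = (\<integral>S. H S \<partial>D)" by (simp only: PiS_mult_matrix_inv(2)[OF W_pd])
  also have "\<dots> = EH" by (rule integral_bounded_linear[OF bounded_linear_matrix_mult_right int_Pi])
  finally show ?thesis .
qed

lemma symmetric_outer_moment_minus_ones: "transpose (outer_moment - ones_mat) = outer_moment - ones_mat"
proof -
  have "transpose outer_moment = (\<integral>S. transpose (outer (thetaPie S) (thetaPie S)) \<partial>D)"
    using integral_bounded_linear[OF bounded_linear_transpose int_second]
    by (simp add: outer_moment_def thetaPie_outer)
  also have "\<dots> = outer_moment" by (simp add: outer_moment_def thetaPie_outer transpose_outer)
  finally show ?thesis by (simp add: transpose_def vec_eq_iff ones_mat_def)
qed

text \<open>\<open>z\<bullet>(E[\<theta>\<^sup>2\<Pi>ee\<^sup>T\<Pi>\<^sup>T] - ee\<^sup>T)z\<close> is the variance of \<open>z\<bullet>\<theta>\<Pi>e\<close>, whose mean is \<open>z\<bullet>e\<close>.\<close>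
lemma psd_outer_moment_minus_ones: "0 \<le> z \<bullet> ((outer_moment - ones_mat) *v z)"
proof -
  have eq: "(z \<bullet> thetaPie S - z \<bullet> ones)\<^sup>2
      = (z \<bullet> thetaPie S)\<^sup>2 - 2 * (z \<bullet> ones) * (z \<bullet> thetaPie S) + (z \<bullet> ones)\<^sup>2" for S
    by (simp add: power2_eq_square algebra_simps)
  have "0 \<le> (\<integral>S. (z \<bullet> thetaPie S - z \<bullet> ones)\<^sup>2 \<partial>D)" by (rule integral_nonneg_AE) auto
  also have "\<dots> = z \<bullet> (outer_moment *v z) - (z \<bullet> ones)\<^sup>2"
    unfolding eq using integral_inner_thetaPie_sq integral_inner_thetaPie
    by (simp add: power2_eq_square prob_space.prob_space[OF D_prob])
  also have "\<dots> = z \<bullet> ((outer_moment - ones_mat) *v z)"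
    by (simp add: matrix_vector_mult_diff_rdistrib inner_diff_right ones_mat_eq_outer quadratic_form_outer
        inner_commute)
  finally show ?thesis .
qed

end

section \<open>One step of JacSketch\<close>

lemma row_form_uminus: "row_form M (- X) = row_form M X"
  by (simp add: row_form_def matrix_vector_mult_uminus_right)

lemma row_form_diff_left: "row_form (M - N) X = row_form M X - row_form N X"
  by (simp add: row_form_def matrix_vector_mult_diff_rdistrib inner_diff_right sum_subtractf)

lemma row_form_ones_mat: "row_form ones_mat X = (norm (X *v ones))\<^sup>2"
  by (simp add: row_form_def norm_sq_matrix_vector_rows ones_mat_eq_outer quadratic_form_outer inner_commute)

lemma row_form_le_lambda_max_msqrt:
  assumes "pos_def_mat W" "transpose M = M"
  shows "row_form M Y \<le> lambda_max (msqrt W ** M ** msqrt W) * row_form (matrix_inv W) Y"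
  unfolding row_form_def sum_distrib_left
  by (intro sum_mono quadratic_form_le_lambda_max_msqrt[OF assms])

lemma lambda_min_mult_le_row_form:
  assumes "pos_def_mat W" "transpose K = K"
  shows "lambda_min (K ** W) * row_form (matrix_inv W) Y \<le> row_form K Y"
  unfolding row_form_def sum_distrib_left
  by (intro sum_mono lambda_min_mult_le_quadratic_form[OF assms])

lemma wnorm_sq_mult_PiS:
  assumes "pos_def_mat W"
  shows "(wnorm W (Z ** PiS W S))\<^sup>2 = row_form (PiS W S ** matrix_inv W) Z"
  using wnorm_sq_jacobian_update[OF assms, of 0 Z S] by (simp add: row_form_def)

lemma norm_sq_descent_step_le:
  fixes w a b :: "'a::real_inner"
  shows "(norm (w - \<alpha> *\<^sub>R (a + b)))\<^sup>2
           \<le> (norm w)\<^sup>2 - 2 * \<alpha> * ((a + b) \<bullet> w) + 2 * \<alpha>\<^sup>2 * (norm a)\<^sup>2 + 2 * \<alpha>\<^sup>2 * (norm b)\<^sup>2"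
proof -
  have "(norm (a + b))\<^sup>2 + (norm (a - b))\<^sup>2 = 2 * (norm a)\<^sup>2 + 2 * (norm b)\<^sup>2"
    by (simp add: power2_norm_eq_inner inner_add_left inner_add_right inner_diff_left inner_diff_right
        inner_commute)
  then have "(norm (a + b))\<^sup>2 \<le> 2 * (norm a)\<^sup>2 + 2 * (norm b)\<^sup>2"
    using zero_le_power2[of "norm (a - b)"] by linarith
  then have "\<alpha>\<^sup>2 * (norm (a + b))\<^sup>2 \<le> \<alpha>\<^sup>2 * (2 * (norm a)\<^sup>2 + 2 * (norm b)\<^sup>2)"
    by (intro mult_left_mono) simp_all
  moreover have "(norm (w - \<alpha> *\<^sub>R (a + b)))\<^sup>2 = (norm w)\<^sup>2 - 2 * \<alpha> * ((a + b) \<bullet> w) + \<alpha>\<^sup>2 * (norm (a + b))\<^sup>2"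
    unfolding power2_norm_eq_inner
    by (simp add: inner_diff_left inner_diff_right inner_commute power2_eq_square)
  ultimately show ?thesis by (simp add: algebra_simps)
qed

lemma integral_le_if_nn_integral_le:
  fixes f :: "'a \<Rightarrow> real"
  assumes "\<And>x. 0 \<le> f x" "(\<integral>\<^sup>+x. ennreal (f x) \<partial>M) \<le> ennreal c" "0 \<le> c"
  shows "integral\<^sup>L M f \<le> c"
proof (cases "integrable M f")
  case True
  then show ?thesis using assms by (simp add: nn_integral_eq_integral ennreal_le_iff)
qed (simp add: not_integrable_integral_eq assms(3))

text \<open>The bookkeeping of one step, with \<open>r2 = \<parallel>x - x\<^sup>*\<parallel>\<^sup>2\<close>, \<open>YW = \<parallel>J - G(x\<^sup>*)\<parallel>\<^sup>2\<close> (in \<open>W\<^sup>-\<^sup>1\<close>) and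
  \<open>Dl = f(x) - f(x\<^sup>*)\<close>: the stepsize conditions make the leftover multiples of \<open>Dl\<close> and \<open>YW\<close>
  nonpositive.\<close>
lemma lyapunov_contraction_arith:
  fixes r2 YW Dl A Ea Eb ER2 \<alpha> \<mu> L1 L2 \<kappa> \<rho> n :: real
  assumes A: "Dl + \<mu>/2 * r2 \<le> A" and Ea: "Ea \<le> 2 * L1 * Dl" and Eb: "Eb \<le> \<rho> / n\<^sup>2 * YW"
    and E2: "ER2 \<le> (1 - \<kappa>) * YW + 2 * L2 * Dl"
    and a0: "0 \<le> \<alpha>" and a1: "4 * \<alpha> * L1 \<le> 1" and a2: "\<alpha> * (4 * L2 * \<rho> / n\<^sup>2 + \<mu>) \<le> \<kappa>"
    and L2: "L2 > 0" and D0: "0 \<le> Dl" and Y0: "0 \<le> YW"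
  shows "r2 - 2 * \<alpha> * A + 2 * \<alpha>\<^sup>2 * Ea + 2 * \<alpha>\<^sup>2 * Eb + \<alpha> / (2 * L2) * ER2
        \<le> (1 - \<mu> * \<alpha>) * (r2 + \<alpha> / (2 * L2) * YW)"
proof -
  define c where "c = \<alpha> / (2 * L2)"
  have c0: "0 \<le> c" using a0 L2 by (simp add: c_def)
  have cL: "2 * c * L2 = \<alpha>" using L2 by (simp add: c_def)
  have s1: "2 * \<alpha> * (Dl + \<mu>/2 * r2) \<le> 2 * \<alpha> * A" using A a0 by (intro mult_left_mono) simp_all
  have s2: "2 * \<alpha>\<^sup>2 * Ea \<le> 2 * \<alpha>\<^sup>2 * (2 * L1 * Dl)" using Ea by (intro mult_left_mono) simp_all
  have s3: "2 * \<alpha>\<^sup>2 * Eb \<le> 2 * \<alpha>\<^sup>2 * (\<rho> / n\<^sup>2 * YW)" using Eb by (intro mult_left_mono) simp_all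
  have s4: "c * ER2 \<le> c * ((1 - \<kappa>) * YW + 2 * L2 * Dl)" using E2 c0 by (intro mult_left_mono) simp_all
  have t1: "\<alpha> * Dl * (4 * \<alpha> * L1 - 1) \<le> 0"
    using a0 D0 a1 by (simp add: mult_nonneg_nonpos)
  have t2: "c * YW * (\<alpha> * (4 * L2 * \<rho> / n\<^sup>2 + \<mu>) - \<kappa>) \<le> 0"
    using c0 Y0 a2 by (simp add: mult_nonneg_nonpos)
  have e2: "2 * \<alpha>\<^sup>2 * (\<rho> / n\<^sup>2 * YW) = c * YW * (4 * L2 * \<alpha> * \<rho> / n\<^sup>2)"
    using cL by (simp add: power2_eq_square field_simps)
  have "r2 - 2 * \<alpha> * A + 2 * \<alpha>\<^sup>2 * Ea + 2 * \<alpha>\<^sup>2 * Eb + c * ER2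
     \<le> r2 - 2 * \<alpha> * (Dl + \<mu>/2 * r2) + 2 * \<alpha>\<^sup>2 * (2 * L1 * Dl) + 2 * \<alpha>\<^sup>2 * (\<rho> / n\<^sup>2 * YW)
        + c * ((1 - \<kappa>) * YW + 2 * L2 * Dl)" using s1 s2 s3 s4 by linarith
  also have "\<dots> = (1 - \<mu> * \<alpha>) * (r2 + c * YW) + \<alpha> * Dl * (4 * \<alpha> * L1 - 1)
        + c * YW * (\<alpha> * (4 * L2 * \<rho> / n\<^sup>2 + \<mu>) - \<kappa>)"
    unfolding e2 using cL by (simp add: algebra_simps power2_eq_square)
  also have "\<dots> \<le> (1 - \<mu> * \<alpha>) * (r2 + c * YW)" using t1 t2 by linarith
  finally show ?thesis by (simp add: c_def)
qed

definition jacsketch_step ::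
  "real^'n^'n \<Rightarrow> (real^'t^'n \<Rightarrow> real) \<Rightarrow> (real^'d \<Rightarrow> real^'n^'d) \<Rightarrow> real
   \<Rightarrow> (real^'d) \<times> (real^'n^'d) \<Rightarrow> real^'t^'n \<Rightarrow> (real^'d) \<times> (real^'n^'d)" where
  "jacsketch_step W \<theta> G \<alpha> s S =
     (let (x, J) = s;
          P = PiS W S;
          g = (1 / real CARD('n)) *\<^sub>R (J *v ones)
              + (\<theta> S / real CARD('n)) *\<^sub>R ((G x - J) ** P *v ones)
      in (x - \<alpha> *\<^sub>R g, J + (G x - J) ** P))"

lemma jacsketch_Suc:
  "jacsketch W \<theta> G \<alpha> x0 J0 \<omega> (Suc k) = jacsketch_step W \<theta> G \<alpha> (jacsketch W \<theta> G \<alpha> x0 J0 \<omega> k) (\<omega> k)"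
  by (simp add: jacsketch_step_def)

context sketch
begin

definition estimator :: "real^'n^'d \<Rightarrow> real^'n^'d \<Rightarrow> real^'t^'n \<Rightarrow> real^'d" where
  "estimator Gx J S = (1 / real CARD('n)) *\<^sub>R (J *v ones + (Gx - J) *v thetaPie S)"

lemma jacsketch_step_eq:
  "jacsketch_step W \<theta> G \<alpha> (x, J) S = (x - \<alpha> *\<^sub>R estimator (G x) J S, J + (G x - J) ** PiS W S)"
  by (simp add: jacsketch_step_def Let_def estimator_def thetaPie_def matrix_vector_mul_assoc[symmetric]
      matrix_vector_mult_scaleR scaleR_add_right)

lemma estimator_decomposition:
  assumes "Gs *v ones = 0"
  shows "estimator Gx J S = (1 / real CARD('n)) *\<^sub>R ((Gx - Gs) *v thetaPie S)
                           + (1 / real CARD('n)) *\<^sub>R ((J - Gs) *v (ones - thetaPie S))"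
  using assms by (simp add: estimator_def matrix_vector_mult_diff_rdistrib matrix_vector_mult_diff_distrib
      algebra_simps)

lemma integral_inner_estimator:
  shows "integrable D (\<lambda>S. estimator Gx J S \<bullet> w)"
    and "(\<integral>S. estimator Gx J S \<bullet> w \<partial>D) = (1 / real CARD('n)) * ((Gx *v ones) \<bullet> w)"
proof -
  have eq: "estimator Gx J S \<bullet> w
      = (1 / real CARD('n)) * ((J *v ones) \<bullet> w) + (1 / real CARD('n)) * ((transpose (Gx - J) *v w) \<bullet> thetaPie S)"
    for S
    using inner_matrix_vector_transpose[of "Gx - J" "thetaPie S" w]
    by (simp add: estimator_def inner_add_right inner_commute add_divide_distrib)
  show "integrable D (\<lambda>S. estimator Gx J S \<bullet> w)"
    unfolding eq using integral_inner_thetaPie(1) by simp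
  have "(transpose (Gx - J) *v w) \<bullet> ones = ((Gx - J) *v ones) \<bullet> w"
    using inner_matrix_vector_transpose[of "Gx - J" ones w] by (simp add: inner_commute)
  then show "(\<integral>S. estimator Gx J S \<bullet> w \<partial>D) = (1 / real CARD('n)) * ((Gx *v ones) \<bullet> w)"
    unfolding eq using integral_inner_thetaPie
    by (simp add: prob_space.prob_space[OF D_prob] matrix_vector_mult_diff_rdistrib inner_diff_left
        algebra_simps flip: add_divide_distrib)
qed

lemma integral_norm_sq_control_variate:
  shows "integrable D (\<lambda>S. (norm (Y *v (ones - thetaPie S)))\<^sup>2)"
    and "(\<integral>S. (norm (Y *v (ones - thetaPie S)))\<^sup>2 \<partial>D) \<le> rho W \<theta> D * row_form (matrix_inv W) Y"
proof -
  have eq: "Y *v (ones - thetaPie S) = Y *v ones + (- Y) *v thetaPie S" for S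
    by (simp add: matrix_vector_mult_diff_distrib matrix_vector_mult_uminus_left)
  show "integrable D (\<lambda>S. (norm (Y *v (ones - thetaPie S)))\<^sup>2)"
    unfolding eq by (rule integral_norm_sq_affine_thetaPie(1))
  have "(\<integral>S. (norm (Y *v (ones - thetaPie S)))\<^sup>2 \<partial>D) = row_form (outer_moment - ones_mat) Y"
    unfolding eq integral_norm_sq_affine_thetaPie(2)
    by (simp add: row_form_uminus row_form_diff_left row_form_ones_mat matrix_vector_mult_uminus_left
        power2_norm_eq_inner)
  also have "\<dots> \<le> rho W \<theta> D * row_form (matrix_inv W) Y"
    using row_form_le_lambda_max_msqrt[OF W_pd symmetric_outer_moment_minus_ones]
    by (simp add: rho_def outer_moment_def)
  finally show "(\<integral>S. (norm (Y *v (ones - thetaPie S)))\<^sup>2 \<partial>D) \<le> rho W \<theta> D * row_form (matrix_inv W) Y" .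
qed

lemma kappa_le_integral_row_form_H:
  "kappa W D * row_form (matrix_inv W) Y \<le> (\<integral>S. row_form (H S) Y \<partial>D)"
proof -
  have "EH ** W = integral\<^sup>L D (\<lambda>S. PiS W S)"
    using pos_def_mat_inverse(2)[OF W_pd] by (simp add: matrix_mul_assoc[symmetric])
  then show ?thesis
    unfolding integral_row_form_H(2) kappa_def using lambda_min_mult_le_row_form[OF W_pd symmetric_EH, of Y]
    by simp
qed

lemma rho_nonneg: "0 \<le> rho W \<theta> D"
  using lambda_max_msqrt_congruence_nonneg[OF W_pd symmetric_outer_moment_minus_ones psd_outer_moment_minus_ones]
  by (simp add: rho_def outer_moment_def)

end

context sketch
begin

lemma Psi_jacsketch_step_le:
  fixes G :: "real^'d \<Rightarrow> real^'n^'d" and x xs :: "real^'d" and J :: "real^'n^'d"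
  assumes Gs0: "G xs *v ones = 0"
  defines "Y \<equiv> J - G xs" and "Z \<equiv> G x - G xs"
  shows "Psi W G xs \<alpha> L2 (jacsketch_step W \<theta> G \<alpha> (x, J) S)
      \<le> (norm (x - xs))\<^sup>2 - 2 * \<alpha> * (estimator (G x) J S \<bullet> (x - xs))
        + 2 * \<alpha>\<^sup>2 * (norm ((1 / real CARD('n)) *\<^sub>R (Z *v thetaPie S)))\<^sup>2
        + 2 * \<alpha>\<^sup>2 * (norm ((1 / real CARD('n)) *\<^sub>R (Y *v (ones - thetaPie S))))\<^sup>2
        + \<alpha> / (2 * L2) * (row_form (matrix_inv W) Y - row_form (H S) Y + row_form (H S) Z)"
proof -
  define a where "a = (1 / real CARD('n)) *\<^sub>R (Z *v thetaPie S)"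
  define b where "b = (1 / real CARD('n)) *\<^sub>R (Y *v (ones - thetaPie S))"
  have est: "estimator (G x) J S = a + b"
    unfolding a_def b_def Y_def Z_def by (rule estimator_decomposition[OF Gs0])
  have "J + (G x - J) ** PiS W S - G xs = Y + (Z - Y) ** PiS W S"
    by (simp add: Y_def Z_def algebra_simps)
  then have wn: "(wnorm W (J + (G x - J) ** PiS W S - G xs))\<^sup>2
      = row_form (matrix_inv W) Y - row_form (H S) Y + row_form (H S) Z"
    by (simp only: wnorm_sq_jacobian_update[OF W_pd])
  have "x - \<alpha> *\<^sub>R estimator (G x) J S - xs = (x - xs) - \<alpha> *\<^sub>R (a + b)"
    by (simp add: est)
  then have "Psi W G xs \<alpha> L2 (jacsketch_step W \<theta> G \<alpha> (x, J) S)
      = (norm ((x - xs) - \<alpha> *\<^sub>R (a + b)))\<^sup>2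
        + \<alpha> / (2 * L2) * (row_form (matrix_inv W) Y - row_form (H S) Y + row_form (H S) Z)"
    by (simp only: Psi_def jacsketch_step_eq fst_conv snd_conv wn)
  then show ?thesis
    using norm_sq_descent_step_le[of "x - xs" \<alpha> a b] by (simp add: est a_def[symmetric] b_def[symmetric])
qed

lemma nn_integral_Psi_step_le:
  fixes G :: "real^'d \<Rightarrow> real^'n^'d" and x xs :: "real^'d" and J :: "real^'n^'d"
  assumes Gs0: "G xs *v ones = 0" and \<alpha>: "0 \<le> \<alpha>" and L2: "0 < L2"
  defines "Y \<equiv> J - G xs" and "Z \<equiv> G x - G xs"
  defines "a \<equiv> \<lambda>S. (1 / real CARD('n)) *\<^sub>R (Z *v thetaPie S)"
    and "b \<equiv> \<lambda>S. (1 / real CARD('n)) *\<^sub>R (Y *v (ones - thetaPie S))"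
  defines "B \<equiv> (norm (x - xs))\<^sup>2 - 2 * \<alpha> * ((1 / real CARD('n)) * ((G x *v ones) \<bullet> (x - xs)))
      + 2 * \<alpha>\<^sup>2 * (\<integral>S. (norm (a S))\<^sup>2 \<partial>D) + 2 * \<alpha>\<^sup>2 * (\<integral>S. (norm (b S))\<^sup>2 \<partial>D)
      + \<alpha> / (2 * L2) * (row_form (matrix_inv W) Y - (\<integral>S. row_form (H S) Y \<partial>D) + (\<integral>S. row_form (H S) Z \<partial>D))"
  shows "(\<integral>\<^sup>+S. ennreal (Psi W G xs \<alpha> L2 (jacsketch_step W \<theta> G \<alpha> (x, J) S)) \<partial>D) \<le> ennreal B"
    and "0 \<le> B"
proof -
  define c where "c = \<alpha> / (2 * L2)"
  define R where "R S = (norm (x - xs))\<^sup>2 - 2 * \<alpha> * (estimator (G x) J S \<bullet> (x - xs))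
      + 2 * \<alpha>\<^sup>2 * (norm (a S))\<^sup>2 + 2 * \<alpha>\<^sup>2 * (norm (b S))\<^sup>2
      + c * (row_form (matrix_inv W) Y - row_form (H S) Y + row_form (H S) Z)" for S
  have R: "Psi W G xs \<alpha> L2 (jacsketch_step W \<theta> G \<alpha> (x, J) S) \<le> R S" for S
    unfolding R_def a_def b_def Y_def Z_def c_def by (rule Psi_jacsketch_step_le[where G=G and xs=xs, OF Gs0])
  have R0: "0 \<le> R S" for S
    using R[of S] \<alpha> L2 by (smt (verit) Psi_def divide_nonneg_pos mult_nonneg_nonneg zero_le_power2)
  have ia: "integrable D (\<lambda>S. (norm (a S))\<^sup>2)"
    using integral_norm_sq_affine_thetaPie(1)[of 0 "(1 / real CARD('n)) *\<^sub>R Z"]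
    by (simp add: a_def scaleR_matrix_vector_assoc[symmetric])
  have "(norm (b S))\<^sup>2 = (norm (Y *v (ones - thetaPie S)))\<^sup>2 / (real CARD('n))\<^sup>2" for S
    by (simp add: b_def power_divide)
  then have ib: "integrable D (\<lambda>S. (norm (b S))\<^sup>2)"
    by (simp only:) (intro integrable_divide_zero integral_norm_sq_control_variate(1))
  have iR: "integrable D R"
    unfolding R_def
    by (intro Bochner_Integration.integrable_add Bochner_Integration.integrable_diff integrable_mult_right
        integrable_const integral_inner_estimator(1) ia ib integral_row_form_H(1))
  have "integral\<^sup>L D R = B"
    unfolding R_def B_def c_def
    using integral_inner_estimator[of "G x" J "x - xs"] ia ib integral_row_form_H(1)[of Y]
      integral_row_form_H(1)[of Z]
    by (simp add: prob_space.prob_space[OF D_prob])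
  moreover have "(\<integral>\<^sup>+S. ennreal (Psi W G xs \<alpha> L2 (jacsketch_step W \<theta> G \<alpha> (x, J) S)) \<partial>D)
      \<le> ennreal (integral\<^sup>L D R)"
    using iR R0 by (simp add: nn_integral_eq_integral[symmetric] nn_integral_mono ennreal_leI R)
  moreover have "0 \<le> integral\<^sup>L D R" using R0 by (simp add: integral_nonneg_AE)
  ultimately show "(\<integral>\<^sup>+S. ennreal (Psi W G xs \<alpha> L2 (jacsketch_step W \<theta> G \<alpha> (x, J) S)) \<partial>D) \<le> ennreal B"
    and "0 \<le> B"
    by simp_all
qed

lemma expected_Psi_jacsketch_step_le:
  fixes G :: "real^'d \<Rightarrow> real^'n^'d" and F :: "real^'d \<Rightarrow> real" and x xs :: "real^'d"
  assumes Gs0: "G xs *v ones = 0" and Fmin: "F xs \<le> F x"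
    and qsc: "F x + ((1 / real CARD('n)) *\<^sub>R (G x *v ones)) \<bullet> (xs - x) + \<mu> / 2 * (norm (xs - x))\<^sup>2 \<le> F xs"
    and L1b: "(\<integral>\<^sup>+S. ennreal ((norm ((\<theta> S / real CARD('n)) *\<^sub>R (G x ** PiS W S *v ones)
                   - (\<theta> S / real CARD('n)) *\<^sub>R (G xs ** PiS W S *v ones)))\<^sup>2) \<partial>D)
              \<le> ennreal (2 * L1 * (F x - F xs))"
    and L2b: "(\<integral>\<^sup>+S. ennreal ((wnorm W ((G x - G xs) ** PiS W S))\<^sup>2) \<partial>D) \<le> ennreal (2 * L2 * (F x - F xs))"
    and \<alpha>: "0 \<le> \<alpha>" "4 * \<alpha> * L1 \<le> 1" "\<alpha> * (4 * L2 * rho W \<theta> D / (real CARD('n))\<^sup>2 + \<mu>) \<le> kappa W D"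
    and L1: "0 < L1" and L2: "0 < L2"
  shows "(\<integral>\<^sup>+S. ennreal (Psi W G xs \<alpha> L2 (jacsketch_step W \<theta> G \<alpha> (x, J) S)) \<partial>D)
           \<le> ennreal ((1 - \<mu> * \<alpha>) * Psi W G xs \<alpha> L2 (x, J))"
    and "0 \<le> (1 - \<mu> * \<alpha>) * Psi W G xs \<alpha> L2 (x, J)"
proof -
  let ?n = "real CARD('n)"
  let ?Y = "J - G xs" and ?Z = "G x - G xs"
  have "(norm ((1 / ?n) *\<^sub>R (?Z *v thetaPie S)))\<^sup>2
      = (norm ((\<theta> S / ?n) *\<^sub>R (G x ** PiS W S *v ones) - (\<theta> S / ?n) *\<^sub>R (G xs ** PiS W S *v ones)))\<^sup>2" for S
    by (simp add: thetaPie_def matrix_vector_mul_assoc[symmetric] matrix_vector_mult_scaleR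
        matrix_vector_mult_diff_rdistrib scaleR_diff_right)
  then have Ea: "(\<integral>S. (norm ((1 / ?n) *\<^sub>R (?Z *v thetaPie S)))\<^sup>2 \<partial>D) \<le> 2 * L1 * (F x - F xs)"
    using L1b L1 Fmin by (intro integral_le_if_nn_integral_le) simp_all
  have "(\<integral>S. (norm ((1 / ?n) *\<^sub>R (?Y *v (ones - thetaPie S))))\<^sup>2 \<partial>D)
      = (\<integral>S. (norm (?Y *v (ones - thetaPie S)))\<^sup>2 \<partial>D) / ?n\<^sup>2"
    by (simp add: power_divide)
  then have Eb: "(\<integral>S. (norm ((1 / ?n) *\<^sub>R (?Y *v (ones - thetaPie S))))\<^sup>2 \<partial>D)
      \<le> rho W \<theta> D / ?n\<^sup>2 * row_form (matrix_inv W) ?Y"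
    using integral_norm_sq_control_variate(2)[of ?Y] by (simp add: divide_right_mono)
  have "0 \<le> row_form (H S) ?Z" for S
    using wnorm_sq_mult_PiS[OF W_pd, of ?Z S] by (metis zero_le_power2)
  then have EHZ: "(\<integral>S. row_form (H S) ?Z \<partial>D) \<le> 2 * L2 * (F x - F xs)"
    using L2b L2 Fmin by (intro integral_le_if_nn_integral_le) (simp_all add: wnorm_sq_mult_PiS[OF W_pd])
  have "(norm (x - xs))\<^sup>2 - 2 * \<alpha> * ((1 / ?n) * ((G x *v ones) \<bullet> (x - xs)))
      + 2 * \<alpha>\<^sup>2 * (\<integral>S. (norm ((1 / ?n) *\<^sub>R (?Z *v thetaPie S)))\<^sup>2 \<partial>D)
      + 2 * \<alpha>\<^sup>2 * (\<integral>S. (norm ((1 / ?n) *\<^sub>R (?Y *v (ones - thetaPie S))))\<^sup>2 \<partial>D)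
      + \<alpha> / (2 * L2) * (row_form (matrix_inv W) ?Y - (\<integral>S. row_form (H S) ?Y \<partial>D)
                         + (\<integral>S. row_form (H S) ?Z \<partial>D))
      \<le> (1 - \<mu> * \<alpha>) * Psi W G xs \<alpha> L2 (x, J)"
  proof (rule order_trans[OF lyapunov_contraction_arith])
    show "F x - F xs + \<mu> / 2 * (norm (x - xs))\<^sup>2 \<le> (1 / ?n) * ((G x *v ones) \<bullet> (x - xs))"
      using qsc by (simp add: norm_minus_commute inner_diff_right algebra_simps)
    show "row_form (matrix_inv W) ?Y - (\<integral>S. row_form (H S) ?Y \<partial>D) + (\<integral>S. row_form (H S) ?Z \<partial>D)
        \<le> (1 - kappa W D) * row_form (matrix_inv W) ?Y + 2 * L2 * (F x - F xs)"
      using kappa_le_integral_row_form_H[of ?Y] EHZ by (simp add: algebra_simps)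
    show "(1 - \<mu> * \<alpha>) * ((norm (x - xs))\<^sup>2 + \<alpha> / (2 * L2) * row_form (matrix_inv W) ?Y)
        \<le> (1 - \<mu> * \<alpha>) * Psi W G xs \<alpha> L2 (x, J)"
      by (simp add: Psi_def wnorm_sq_eq_row_form[OF W_pd])
  qed (use Ea Eb \<alpha> L2 Fmin row_form_nonneg[OF psd_matrix_inv[OF W_pd]] in auto)
  then show "(\<integral>\<^sup>+S. ennreal (Psi W G xs \<alpha> L2 (jacsketch_step W \<theta> G \<alpha> (x, J) S)) \<partial>D)
           \<le> ennreal ((1 - \<mu> * \<alpha>) * Psi W G xs \<alpha> L2 (x, J))"
    and "0 \<le> (1 - \<mu> * \<alpha>) * Psi W G xs \<alpha> L2 (x, J)"
    using nn_integral_Psi_step_le[where G=G and xs=xs and x=x and J=J, OF Gs0 \<alpha>(1) L2]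
    by (auto intro: order_trans ennreal_leI)
qed

end

section \<open>Measurability of the iterates\<close>

lemma borel_measurable_vec_nth: "F \<in> borel_measurable M \<Longrightarrow> (\<lambda>x. F x $ i) \<in> borel_measurable M"
  for F :: "'b \<Rightarrow> 'a::euclidean_space^'n"
  by (rule borel_measurable_continuous_on[OF continuous_on_component[OF continuous_on_id]])

lemma borel_measurable_vec:
  fixes F :: "'b \<Rightarrow> 'a::euclidean_space^'n"
  assumes "\<And>i. (\<lambda>x. F x $ i) \<in> borel_measurable M"
  shows "F \<in> borel_measurable M"
proof -
  have axis: "continuous_on UNIV (axis i :: 'a \<Rightarrow> 'a^'n)" for i
  proof -
    have "continuous_on UNIV (\<lambda>c::'a. (\<chi> j. if j = i then c else 0) :: 'a^'n)"
    proof (intro continuous_on_vec_lambda)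
      fix j show "continuous_on UNIV (\<lambda>c::'a. if j = i then c else 0)"
        by (cases "j = i") (simp_all add: continuous_on_id continuous_on_const)
    qed
    then show ?thesis by (simp add: axis_def[abs_def])
  qed
  have "(\<lambda>x. \<Sum>i\<in>UNIV. axis i (F x $ i)) \<in> borel_measurable M"
    by (intro borel_measurable_sum borel_measurable_continuous_on[OF axis] assms)
  moreover have "(\<lambda>x. \<Sum>i\<in>UNIV. axis i (F x $ i)) = F"
    by (simp add: fun_eq_iff vec_eq_iff axis_def sum.delta' if_distrib cong: if_cong)
  ultimately show ?thesis by simp
qed

lemma borel_measurable_matrix_matrix_mult:
  fixes A :: "'b \<Rightarrow> real^'k^'m" and B :: "'b \<Rightarrow> real^'n^'k"
  assumes "A \<in> borel_measurable M" "B \<in> borel_measurable M"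
  shows "(\<lambda>x. A x ** B x) \<in> borel_measurable M"
proof (intro borel_measurable_vec)
  fix i j
  have "(\<lambda>x. \<Sum>k\<in>UNIV. A x $ i $ k * B x $ k $ j) \<in> borel_measurable M"
    using assms by (intro borel_measurable_sum borel_measurable_times borel_measurable_vec_nth) auto
  then show "(\<lambda>x. (A x ** B x) $ i $ j) \<in> borel_measurable M"
    by (simp add: matrix_matrix_mult_def)
qed

lemma borel_measurable_matrix_vector_mult:
  fixes A :: "'b \<Rightarrow> real^'k^'m" and v :: "'b \<Rightarrow> real^'k"
  assumes "A \<in> borel_measurable M" "v \<in> borel_measurable M"
  shows "(\<lambda>x. A x *v v x) \<in> borel_measurable M"
proof (intro borel_measurable_vec)
  fix i
  have "(\<lambda>x. \<Sum>k\<in>UNIV. A x $ i $ k * v x $ k) \<in> borel_measurable M"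
    using assms by (intro borel_measurable_sum borel_measurable_times borel_measurable_vec_nth) auto
  then show "(\<lambda>x. (A x *v v x) $ i) \<in> borel_measurable M"
    by (simp add: matrix_vector_mult_def)
qed

lemma borel_measurable_wnorm:
  fixes X :: "'b \<Rightarrow> real^'n^'d"
  assumes "X \<in> borel_measurable M"
  shows "(\<lambda>x. wnorm W (X x)) \<in> borel_measurable M"
proof -
  have "(\<lambda>x. transpose (X x)) \<in> borel_measurable M"
    by (intro borel_measurable_vec) (simp add: transpose_def borel_measurable_vec_nth assms)
  then have "(\<lambda>x. trace (X x ** matrix_inv W ** transpose (X x))) \<in> borel_measurable M"
    unfolding trace_def
    by (intro borel_measurable_sum borel_measurable_vec_nth borel_measurable_matrix_matrix_mult assms
        borel_measurable_const)
  from measurable_comp[OF this borel_measurable_sqrt] show ?thesis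
    by (simp add: wnorm_def o_def)
qed

lemma difference_quotient_tendsto:
  fixes f :: "'a::real_inner \<Rightarrow> real"
  assumes der: "(f has_derivative (\<lambda>v. g \<bullet> v)) (at x)" and h: "filterlim h (at 0) sequentially"
  shows "(\<lambda>m. (f (x + h m *\<^sub>R e) - f x) / h m) \<longlonglongrightarrow> g \<bullet> e"
proof -
  define \<phi> where "\<phi> t = f (x + t *\<^sub>R e)" for t :: real
  have line: "((\<lambda>t. x + t *\<^sub>R e) has_derivative (\<lambda>t. t *\<^sub>R e)) (at 0)"
    by (auto intro!: derivative_eq_intros)
  have "(f has_derivative (\<lambda>v. g \<bullet> v)) (at ((\<lambda>t. x + t *\<^sub>R e) 0))" using der by simp
  from diff_chain_at[OF line this] have "(\<phi> has_derivative (\<lambda>t. g \<bullet> (t *\<^sub>R e))) (at 0)"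
    by (simp add: \<phi>_def[abs_def] o_def)
  then have "(\<phi> has_derivative (*) (g \<bullet> e)) (at 0)"
    by (rule has_derivative_eq_rhs) (auto simp: mult.commute)
  then have "(\<phi> has_field_derivative (g \<bullet> e)) (at 0)"
    by (simp add: has_field_derivative_def)
  then have "((\<lambda>t. (\<phi> t - \<phi> 0) / (t - 0)) \<longlongrightarrow> g \<bullet> e) (at 0)"
    by (simp add: has_field_derivative_iff)
  from filterlim_compose[OF this h] show ?thesis by (simp add: \<phi>_def)
qed

text \<open>The gradient is the pointwise limit of the continuous difference quotients along the axes.\<close>
lemma borel_measurable_gradient:
  fixes f :: "real^'d \<Rightarrow> real" and g :: "real^'d \<Rightarrow> real^'d"
  assumes der: "\<And>x. (f has_derivative (\<lambda>h. g x \<bullet> h)) (at x)"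
  shows "g \<in> borel_measurable borel"
proof -
  define h where "h m = inverse (real (Suc m))" for m :: nat
  define u where "u m x = (\<chi> r. (f (x + h m *\<^sub>R axis r 1) - f x) / h m)" for m x
  have contf: "continuous_on UNIV f"
    by (rule has_derivative_continuous_on) (use der in blast)
  have meas: "u m \<in> borel_measurable borel" for m
  proof (rule borel_measurable_continuous_onI)
    show "continuous_on UNIV (u m)" unfolding u_def
    proof (intro continuous_on_vec_lambda continuous_on_divide continuous_on_diff continuous_on_const)
      show "continuous_on UNIV (\<lambda>x. f (x + h m *\<^sub>R axis r 1))" for r
        by (rule continuous_on_compose2[OF contf]) (auto intro!: continuous_intros)
    qed (simp_all add: contf h_def)
  qed
  have "filterlim h (at 0) sequentially"
    unfolding filterlim_at h_def using LIMSEQ_inverse_real_of_nat by simp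
  then have "(\<lambda>m. u m x) \<longlonglongrightarrow> (\<chi> r. g x \<bullet> axis r 1)" for x
    unfolding u_def by (intro tendsto_vec_lambda difference_quotient_tendsto der)
  then have "(\<lambda>m. u m x) \<longlonglongrightarrow> g x" for x by (simp add: inner_axis)
  then show ?thesis by (rule borel_measurable_LIMSEQ_metric[OF meas])
qed

lemma borel_measurable_jac:
  assumes "\<And>i. gf i \<in> borel_measurable borel"
  shows "jac gf \<in> borel_measurable borel"
  unfolding jac_def[abs_def] by (intro borel_measurable_vec) (simp add: borel_measurable_vec_nth assms)

lemma jac_mult_ones: "jac gf x *v ones = (\<Sum>i\<in>UNIV. gf i x)"
  by (simp add: jac_def matrix_vector_mult_def ones_def vec_eq_iff)

lemma jacsketch_prefix_cong:
  "(\<And>i. i < k \<Longrightarrow> \<omega> i = \<omega>' i) \<Longrightarrow> jacsketch W \<theta> G \<alpha> x0 J0 \<omega> k = jacsketch W \<theta> G \<alpha> x0 J0 \<omega>' k"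
  by (induction k) (simp_all add: jacsketch_Suc)

lemma measurable_jacsketch:
  fixes G :: "real^'d \<Rightarrow> real^'n^'d" and D :: "(real^'t^'n) measure"
  assumes G: "G \<in> borel_measurable borel" and Pi: "(\<lambda>S. PiS W S) \<in> borel_measurable D"
    and \<theta>: "\<theta> \<in> borel_measurable D"
  shows "{..<k} \<subseteq> I \<Longrightarrow> (\<lambda>\<omega>. fst (jacsketch W \<theta> G \<alpha> x0 J0 \<omega> k)) \<in> borel_measurable (\<Pi>\<^sub>M i\<in>I. D)
      \<and> (\<lambda>\<omega>. snd (jacsketch W \<theta> G \<alpha> x0 J0 \<omega> k)) \<in> borel_measurable (\<Pi>\<^sub>M i\<in>I. D)"
proof (induction k)
  case (Suc k)
  have k: "k \<in> I" and "{..<k} \<subseteq> I" using Suc.prems by auto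
  then have IH: "(\<lambda>\<omega>. fst (jacsketch W \<theta> G \<alpha> x0 J0 \<omega> k)) \<in> borel_measurable (\<Pi>\<^sub>M i\<in>I. D)"
      "(\<lambda>\<omega>. snd (jacsketch W \<theta> G \<alpha> x0 J0 \<omega> k)) \<in> borel_measurable (\<Pi>\<^sub>M i\<in>I. D)"
    using Suc.IH by auto
  have "(\<lambda>\<omega>. PiS W (\<omega> k)) \<in> borel_measurable (\<Pi>\<^sub>M i\<in>I. D)"
    "(\<lambda>\<omega>. \<theta> (\<omega> k)) \<in> borel_measurable (\<Pi>\<^sub>M i\<in>I. D)"
    "(\<lambda>\<omega>. G (fst (jacsketch W \<theta> G \<alpha> x0 J0 \<omega> k))) \<in> borel_measurable (\<Pi>\<^sub>M i\<in>I. D)"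
    using measurable_comp[OF measurable_component_singleton[OF k] Pi]
      measurable_comp[OF measurable_component_singleton[OF k] \<theta>] measurable_comp[OF IH(1) G]
    by (simp_all add: o_def)
  with IH show ?case
    unfolding jacsketch_Suc jacsketch_step_def case_prod_beta Let_def fst_conv snd_conv
    by (intro conjI borel_measurable_add borel_measurable_diff borel_measurable_scaleR
        borel_measurable_matrix_matrix_mult borel_measurable_matrix_vector_mult
        borel_measurable_const borel_measurable_divide) simp_all
qed simp

lemma measurable_Psi:
  fixes s :: "'b \<Rightarrow> (real^'d) \<times> (real^'n^'d)"
  assumes "(\<lambda>\<omega>. fst (s \<omega>)) \<in> borel_measurable M" "(\<lambda>\<omega>. snd (s \<omega>)) \<in> borel_measurable M"
  shows "(\<lambda>\<omega>. Psi W G xs \<alpha> L2 (s \<omega>)) \<in> borel_measurable M"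
proof -
  have "(\<lambda>\<omega>. wnorm W (snd (s \<omega>) - G xs)) \<in> borel_measurable M"
    using assms(2) by (intro borel_measurable_wnorm borel_measurable_diff borel_measurable_const)
  with assms(1) show ?thesis unfolding Psi_def by measurable
qed

section \<open>Linear convergence\<close>

lemma EPsi_le_geometric:
  fixes G :: "real^'d \<Rightarrow> real^'n^'d" and D :: "(real^'t^'n) measure"
  assumes D: "prob_space D" and G: "G \<in> borel_measurable borel"
    and Pi: "(\<lambda>S. PiS W S) \<in> borel_measurable D" and \<theta>: "\<theta> \<in> borel_measurable D"
    and step: "\<And>s. (\<integral>\<^sup>+S. ennreal (Psi W G xs \<alpha> L2 (jacsketch_step W \<theta> G \<alpha> s S)) \<partial>D)
                    \<le> ennreal (q * Psi W G xs \<alpha> L2 s)"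
    and q: "0 \<le> q" and Psi_nonneg: "\<And>s. 0 \<le> Psi W G xs \<alpha> L2 s"
  shows "EPsi W \<theta> D G xs \<alpha> L2 x0 J0 k \<le> ennreal (q ^ k * Psi W G xs \<alpha> L2 (x0, J0))"
proof (induction k)
  case 0
  have "prob_space (\<Pi>\<^sub>M i\<in>{..<0::nat}. D)" by (rule prob_space_PiM) (rule D)
  then show ?case by (simp add: EPsi_def prob_space.emeasure_space_1)
next
  case (Suc k)
  interpret product_sigma_finite "\<lambda>_::nat. D"
    unfolding product_sigma_finite_def using prob_space_imp_sigma_finite[OF D] by blast
  let ?s = "\<lambda>k w. jacsketch W \<theta> G \<alpha> x0 J0 w k"
  let ?Psi = "\<lambda>s. ennreal (Psi W G xs \<alpha> L2 s)"
  have meas: "(\<lambda>w. ?Psi (?s j w)) \<in> borel_measurable (\<Pi>\<^sub>M i\<in>I. D)" if "{..<j} \<subseteq> I" for j I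
  proof -
    have "(\<lambda>w. Psi W G xs \<alpha> L2 (?s j w)) \<in> borel_measurable (\<Pi>\<^sub>M i\<in>I. D)"
      using measurable_jacsketch[OF G Pi \<theta> that] by (intro measurable_Psi) auto
    then show ?thesis by simp
  qed
  text \<open>The last sample is independent of the state it acts on (Tonelli on \<open>{..<k} \<union> {k}\<close>).\<close>
  have "EPsi W \<theta> D G xs \<alpha> L2 x0 J0 (Suc k) = (\<integral>\<^sup>+w. ?Psi (?s (Suc k) w) \<partial>(\<Pi>\<^sub>M i\<in>insert k {..<k}. D))"
    by (simp add: EPsi_def lessThan_Suc)
  also have "\<dots> = (\<integral>\<^sup>+w. (\<integral>\<^sup>+S. ?Psi (?s (Suc k) (w(k := S))) \<partial>D) \<partial>(\<Pi>\<^sub>M i\<in>{..<k}. D))"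
    by (rule product_nn_integral_insert) (auto intro!: meas simp del: jacsketch.simps)
  also have "\<dots> = (\<integral>\<^sup>+w. (\<integral>\<^sup>+S. ?Psi (jacsketch_step W \<theta> G \<alpha> (?s k w) S) \<partial>D) \<partial>(\<Pi>\<^sub>M i\<in>{..<k}. D))"
  proof -
    have "?s k (w(k := S)) = ?s k w" for w S by (rule jacsketch_prefix_cong) simp
    then show ?thesis by (simp add: jacsketch_Suc del: jacsketch.simps)
  qed
  also have "\<dots> \<le> (\<integral>\<^sup>+w. ennreal q * ?Psi (?s k w) \<partial>(\<Pi>\<^sub>M i\<in>{..<k}. D))"
    using step q Psi_nonneg by (intro nn_integral_mono) (simp add: ennreal_mult)
  also have "\<dots> = ennreal q * EPsi W \<theta> D G xs \<alpha> L2 x0 J0 k"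
    unfolding EPsi_def using meas[of k "{..<k}"] by (intro nn_integral_cmult) auto
  also have "\<dots> \<le> ennreal q * ennreal (q ^ k * Psi W G xs \<alpha> L2 (x0, J0))"
    using Suc.IH by (rule mult_left_mono) simp
  also have "\<dots> = ennreal (q ^ Suc k * Psi W G xs \<alpha> L2 (x0, J0))"
    using q Psi_nonneg by (simp add: ennreal_mult[symmetric] mult.assoc)
  finally show ?case .
qed

lemma gradient_eq_0_at_minimum:
  fixes f :: "'a::real_inner \<Rightarrow> real"
  assumes "(f has_derivative (\<lambda>h. g \<bullet> h)) (at xs)" and "\<And>x. f xs \<le> f x"
  shows "g = 0"
proof -
  have "(\<lambda>h. g \<bullet> h) = (\<lambda>h. 0)"
    by (rule differential_zero_maxmin[OF UNIV_I open_UNIV]) (use assms in auto)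
  then have "g \<bullet> g = 0" by meson
  then show ?thesis by simp
qed

lemma power_one_minus_le:
  fixes t eps :: real and k :: nat
  assumes t0: "0 < t" and t1: "t \<le> 1" and e0: "0 < eps" and kk: "1 / t * ln (1 / eps) \<le> real k"
  shows "(1 - t) ^ k \<le> eps"
proof (cases "eps \<ge> 1")
  case True
  have "(1 - t) ^ k \<le> 1" using t0 t1 by (intro power_le_one) auto
  then show ?thesis using True by linarith
next
  case False
  have "(1 - t) ^ k \<le> exp (- t) ^ k"
    using t1 exp_ge_add_one_self[of "- t"] by (intro power_mono) auto
  also have "\<dots> = exp (- (t * real k))" by (simp add: exp_of_nat_mult[symmetric] mult.commute)
  also have "\<dots> \<le> exp (- ln (1 / eps))"
  proof -
    have "ln (1 / eps) \<le> t * real k" using kk t0 by (simp add: field_simps)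
    then show ?thesis by simp
  qed
  also have "\<dots> = eps" using e0 by (simp add: ln_div)
  finally show ?thesis .
qed

lemma inverse_mult_min:
  fixes a b m :: real
  assumes "0 < a" "0 < b" "0 < m"
  shows "1 / (m * min a b) = max (1 / (m * a)) (1 / (m * b))"
  using assms by (cases "a \<le> b") (auto simp: min_def max_def field_simps)

locale jacsketch_problem = sketch W D \<theta>
  for W :: "real^'n::finite^'n" and D :: "(real^'t::finite^'n) measure" and \<theta> +
  fixes f :: "'n \<Rightarrow> real^'d::finite \<Rightarrow> real" and gf :: "'n \<Rightarrow> real^'d \<Rightarrow> real^'d"
    and xs :: "real^'d" and \<mu> L1 L2 :: real
  assumes grad: "\<And>i x. (f i has_derivative (\<lambda>h. gf i x \<bullet> h)) (at x)"
    and minimizer: "\<And>x. (1 / real CARD('n)) * (\<Sum>i\<in>UNIV. f i xs)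
                        \<le> (1 / real CARD('n)) * (\<Sum>i\<in>UNIV. f i x)"
    and mu_pos: "\<mu> > 0"
    and quasi_sc: "\<And>x. (1 / real CARD('n)) * (\<Sum>i\<in>UNIV. f i xs)
                     \<ge> (1 / real CARD('n)) * (\<Sum>i\<in>UNIV. f i x)
                       + ((1 / real CARD('n)) *\<^sub>R (\<Sum>i\<in>UNIV. gf i x)) \<bullet> (xs - x)
                       + \<mu> / 2 * (norm (xs - x))\<^sup>2"
    and theta_rv: "\<theta> \<in> borel_measurable D"
    and L1_pos: "L1 > 0" and L2_pos: "L2 > 0"
    and L1_bound: "\<And>x. (\<integral>\<^sup>+ S. ennreal ((norm (
                           (\<theta> S / real CARD('n)) *\<^sub>R (jac gf x ** PiS W S *v ones)
                         - (\<theta> S / real CARD('n)) *\<^sub>R (jac gf xs ** PiS W S *v ones)))\<^sup>2) \<partial>D)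
                 \<le> ennreal (2 * L1 * ((1 / real CARD('n)) * (\<Sum>i\<in>UNIV. f i x)
                                      - (1 / real CARD('n)) * (\<Sum>i\<in>UNIV. f i xs)))"
    and L2_bound: "\<And>x. (\<integral>\<^sup>+ S. ennreal ((wnorm W ((jac gf x - jac gf xs) ** PiS W S))\<^sup>2) \<partial>D)
                 \<le> ennreal (2 * L2 * ((1 / real CARD('n)) * (\<Sum>i\<in>UNIV. f i x)
                                      - (1 / real CARD('n)) * (\<Sum>i\<in>UNIV. f i xs)))"
    and kappa_pos: "kappa W D > 0"
begin

definition alpha_max :: real where
  "alpha_max = min (1 / (4 * L1)) (kappa W D / (4 * L2 * rho W \<theta> D / (real CARD('n))\<^sup>2 + \<mu>))"

lemma alpha_max_pos: "0 < alpha_max"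
proof -
  have "0 \<le> 4 * L2 * rho W \<theta> D / (real CARD('n))\<^sup>2" using rho_nonneg L2_pos by simp
  then show ?thesis using L1_pos kappa_pos mu_pos by (simp add: alpha_max_def)
qed

lemma jac_minimizer_mult_ones: "jac gf xs *v ones = 0"
proof -
  have "((\<lambda>x. \<Sum>i\<in>UNIV. f i x) has_derivative (\<lambda>h. (\<Sum>i\<in>UNIV. gf i xs) \<bullet> h)) (at xs)"
    using has_derivative_sum[of UNIV "\<lambda>i. f i" "\<lambda>i h. gf i xs \<bullet> h"] grad by (simp add: inner_sum_left)
  moreover have "(\<Sum>i\<in>UNIV. f i xs) \<le> (\<Sum>i\<in>UNIV. f i x)" for x
    using minimizer[of x] by (simp add: divide_le_cancel)
  ultimately show ?thesis by (simp add: jac_mult_ones gradient_eq_0_at_minimum)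
qed

lemma expected_Psi_step_contraction:
  assumes "0 \<le> \<alpha>" "\<alpha> \<le> alpha_max"
  shows "(\<integral>\<^sup>+S. ennreal (Psi W (jac gf) xs \<alpha> L2 (jacsketch_step W \<theta> (jac gf) \<alpha> s S)) \<partial>D)
           \<le> ennreal ((1 - \<mu> * \<alpha>) * Psi W (jac gf) xs \<alpha> L2 s)"
    and "0 \<le> (1 - \<mu> * \<alpha>) * Psi W (jac gf) xs \<alpha> L2 s"
proof -
  obtain x J where s: "s = (x, J)" by (cases s)
  have "4 * \<alpha> * L1 \<le> 1" using assms L1_pos by (simp add: alpha_max_def field_simps)
  moreover have "\<alpha> * (4 * L2 * rho W \<theta> D / (real CARD('n))\<^sup>2 + \<mu>) \<le> kappa W D"
    using assms alpha_max_pos rho_nonneg L2_pos mu_pos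
    by (simp add: alpha_max_def le_divide_eq add_nonneg_pos)
  ultimately show "(\<integral>\<^sup>+S. ennreal (Psi W (jac gf) xs \<alpha> L2 (jacsketch_step W \<theta> (jac gf) \<alpha> s S)) \<partial>D)
           \<le> ennreal ((1 - \<mu> * \<alpha>) * Psi W (jac gf) xs \<alpha> L2 s)"
    and "0 \<le> (1 - \<mu> * \<alpha>) * Psi W (jac gf) xs \<alpha> L2 s"
    unfolding s using jac_minimizer_mult_ones minimizer[of x] quasi_sc[of x] L1_bound[of x] L2_bound[of x] assms L1_pos L2_pos
    by (auto intro!: expected_Psi_jacsketch_step_le[where F="\<lambda>x. (1 / real CARD('n)) * (\<Sum>i\<in>UNIV. f i x)"]
        simp: jac_mult_ones)
qed

text \<open>The contraction bound gives \<open>0 \<le> (1 - \<mu>\<alpha>) \<Psi>\<close> at every state; take one with \<open>\<Psi> > 0\<close>.\<close>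
lemma contraction_factor_nonneg:
  assumes "0 \<le> \<alpha>" "\<alpha> \<le> alpha_max"
  shows "0 \<le> 1 - \<mu> * \<alpha>"
proof -
  have "(ones :: real^'d) \<noteq> 0" by (simp add: ones_def vec_eq_iff)
  then have "0 < Psi W (jac gf) xs \<alpha> L2 (xs + ones, jac gf xs)"
    by (simp add: Psi_def wnorm_def trace_def)
  then show ?thesis
    using expected_Psi_step_contraction(2)[OF assms, of "(xs + ones, jac gf xs)"]
    by (simp add: zero_le_mult_iff)
qed

lemma EPsi_linear_convergence:
  assumes "0 \<le> \<alpha>" "\<alpha> \<le> alpha_max"
  shows "EPsi W \<theta> D (jac gf) xs \<alpha> L2 x0 J0 k \<le> ennreal ((1 - \<mu> * \<alpha>) ^ k * Psi W (jac gf) xs \<alpha> L2 (x0, J0))"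
proof (rule EPsi_le_geometric[OF D_prob _ borel_measurable_integrable[OF int_Pi] theta_rv])
  show "jac gf \<in> borel_measurable borel"
    using borel_measurable_gradient[OF grad] by (intro borel_measurable_jac)
  show "0 \<le> Psi W (jac gf) xs \<alpha> L2 s" for s using assms(1) L2_pos by (simp add: Psi_def)
  show "(\<integral>\<^sup>+S. ennreal (Psi W (jac gf) xs \<alpha> L2 (jacsketch_step W \<theta> (jac gf) \<alpha> s S)) \<partial>D)
      \<le> ennreal ((1 - \<mu> * \<alpha>) * Psi W (jac gf) xs \<alpha> L2 s)" for s
    by (rule expected_Psi_step_contraction(1)[OF assms])
  show "0 \<le> 1 - \<mu> * \<alpha>" by (rule contraction_factor_nonneg[OF assms])
qed

lemma EPsi_iteration_complexity:
  assumes "0 < \<epsilon>"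
    and "max (4 * L1 / \<mu>) (1 / kappa W D + 4 * rho W \<theta> D * L2 / (kappa W D * \<mu> * (real CARD('n))\<^sup>2))
           * ln (1 / \<epsilon>) \<le> real k"
  shows "EPsi W \<theta> D (jac gf) xs alpha_max L2 x0 J0 k \<le> ennreal (\<epsilon> * Psi W (jac gf) xs alpha_max L2 (x0, J0))"
proof -
  let ?den = "4 * L2 * rho W \<theta> D / (real CARD('n))\<^sup>2 + \<mu>"
  have den: "0 < ?den" using rho_nonneg L2_pos mu_pos by (simp add: add_nonneg_pos)
  have "1 / (\<mu> * alpha_max) = max (1 / (\<mu> * (1 / (4 * L1)))) (1 / (\<mu> * (kappa W D / ?den)))"
    unfolding alpha_max_def using L1_pos kappa_pos den mu_pos by (intro inverse_mult_min) auto
  also have "\<dots> = max (4 * L1 / \<mu>) (1 / kappa W D + 4 * rho W \<theta> D * L2 / (kappa W D * \<mu> * (real CARD('n))\<^sup>2))"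
    using kappa_pos mu_pos by (simp add: field_simps)
  finally have "(1 - \<mu> * alpha_max) ^ k \<le> \<epsilon>"
    using assms alpha_max_pos mu_pos contraction_factor_nonneg[OF less_imp_le[OF alpha_max_pos] order_refl]
    by (intro power_one_minus_le) auto
  moreover have "0 \<le> Psi W (jac gf) xs alpha_max L2 (x0, J0)"
    using alpha_max_pos L2_pos by (simp add: Psi_def)
  ultimately have "(1 - \<mu> * alpha_max) ^ k * Psi W (jac gf) xs alpha_max L2 (x0, J0)
      \<le> \<epsilon> * Psi W (jac gf) xs alpha_max L2 (x0, J0)"
    by (rule mult_right_mono)
  then show ?thesis
    using EPsi_linear_convergence[OF less_imp_le[OF alpha_max_pos] order_refl] order_trans ennreal_leI
    by blast
qed

end

theorem theorem3p6:
  fixes f :: "'n::finite \<Rightarrow> real^'d::finite \<Rightarrow> real"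
    and gf :: "'n \<Rightarrow> real^'d \<Rightarrow> real^'d"
    and xs :: "real^'d"
    and \<mu> L1 L2 \<alpha> :: real
    and W :: "real^'n^'n"
    and D :: "(real^'t::finite^'n) measure"
    and \<theta> :: "real^'t^'n \<Rightarrow> real"
    and x0 :: "real^'d" and J0 :: "real^'n^'d"
  assumes grad: "\<And>i x. (f i has_derivative (\<lambda>h. gf i x \<bullet> h)) (at x)"
    and minimizer: "\<And>x. (1 / real CARD('n)) * (\<Sum>i\<in>UNIV. f i xs)
                        \<le> (1 / real CARD('n)) * (\<Sum>i\<in>UNIV. f i x)"
    and mu_pos: "\<mu> > 0"
    and quasi_sc: "\<And>x. (1 / real CARD('n)) * (\<Sum>i\<in>UNIV. f i xs)
                     \<ge> (1 / real CARD('n)) * (\<Sum>i\<in>UNIV. f i x)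
                       + ((1 / real CARD('n)) *\<^sub>R (\<Sum>i\<in>UNIV. gf i x)) \<bullet> (xs - x)
                       + \<mu> / 2 * (norm (xs - x))\<^sup>2"
    and W_pd: "pos_def_mat W"
    and D_prob: "prob_space D"
    and theta_rv: "\<theta> \<in> borel_measurable D"
    and int_thetaPie: "integrable D (\<lambda>S. \<theta> S *\<^sub>R (PiS W S *v ones))"
    and unbiased: "integral\<^sup>L D (\<lambda>S. \<theta> S *\<^sub>R (PiS W S *v ones)) = ones"
    and int_Pi: "integrable D (\<lambda>S. PiS W S)"
    and int_second: "integrable D (\<lambda>S. (\<theta> S)\<^sup>2 *\<^sub>R (PiS W S ** ones_mat ** transpose (PiS W S)))"
    and L1_pos: "L1 > 0" and L2_pos: "L2 > 0"
    and L1_bound: "\<And>x. (\<integral>\<^sup>+ S. ennreal ((norm (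
                           (\<theta> S / real CARD('n)) *\<^sub>R (jac gf x ** PiS W S *v ones)
                         - (\<theta> S / real CARD('n)) *\<^sub>R (jac gf xs ** PiS W S *v ones)))\<^sup>2) \<partial>D)
                 \<le> ennreal (2 * L1 * ((1 / real CARD('n)) * (\<Sum>i\<in>UNIV. f i x)
                                      - (1 / real CARD('n)) * (\<Sum>i\<in>UNIV. f i xs)))"
    and L2_bound: "\<And>x. (\<integral>\<^sup>+ S. ennreal ((wnorm W ((jac gf x - jac gf xs) ** PiS W S))\<^sup>2) \<partial>D)
                 \<le> ennreal (2 * L2 * ((1 / real CARD('n)) * (\<Sum>i\<in>UNIV. f i x)
                                      - (1 / real CARD('n)) * (\<Sum>i\<in>UNIV. f i xs)))"
    and kappa_pos: "kappa W D > 0"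
  shows "(0 \<le> \<alpha> \<and> \<alpha> \<le> min (1 / (4 * L1))
                         (kappa W D / (4 * L2 * rho W \<theta> D / (real CARD('n))\<^sup>2 + \<mu>)) \<longrightarrow>
            (\<forall>k. EPsi W \<theta> D (jac gf) xs \<alpha> L2 x0 J0 k
                   \<le> ennreal ((1 - \<mu> * \<alpha>) ^ k * Psi W (jac gf) xs \<alpha> L2 (x0, J0))))
       \<and> (\<alpha> = min (1 / (4 * L1)) (kappa W D / (4 * L2 * rho W \<theta> D / (real CARD('n))\<^sup>2 + \<mu>)) \<longrightarrow>
            (\<forall>k \<epsilon>. 0 < \<epsilon> \<longrightarrow>
               real k \<ge> max (4 * L1 / \<mu>)
                             (1 / kappa W D + 4 * rho W \<theta> D * L2 / (kappa W D * \<mu> * (real CARD('n))\<^sup>2))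
                          * ln (1 / \<epsilon>)
               \<longrightarrow> EPsi W \<theta> D (jac gf) xs \<alpha> L2 x0 J0 k \<le> ennreal (\<epsilon> * Psi W (jac gf) xs \<alpha> L2 (x0, J0))))"
proof -
  interpret jacsketch_problem W D \<theta> f gf xs \<mu> L1 L2
    by (rule jacsketch_problem.intro[OF sketch.intro jacsketch_problem_axioms.intro]) (fact assms)+
  show ?thesis
    using EPsi_linear_convergence EPsi_iteration_complexity by (simp add: alpha_max_def)
qed

end
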